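(* Let $\mathbf b=\{b_n\}_{n\ge1}$ be a nonnegative real sequence with $\mathbf b\in NBVS$. Then the series $\sum_{n=1}^\infty b_n\sin nx$ converges uniformly on $\mathbb R$ if and only if $\lim_{n\to\infty}nb_n=0$. Moreover, if the series converges at every $x\in\mathbb R$, then its sum function $f(x)=\sum_{n=1}^\infty b_n\sin nx$ is continuous on $\mathbb R$ if and only if $\lim_{n\to\infty}nb_n=0$.
   Context: For $\theta_0\in[0,\pi/2)$ let $M(\theta_0)=\{z\in\mathbb C: |\arg z|\le\theta_0\}$ (with $0\in M(\theta_0)$). Write $\Delta c_n=c_n-c_{n+1}$. A complex sequence $\mathbf C=\{c_n\}$ belongs to $NBVS$ if there is $\theta_0\in[0,\pi/2)$ with $c_n\in M(\theta_0)$ for all $n\ge1$ and a constant $K(\mathbf C)>0$ (depending only on $\mathbf C$) such that $\sum_{n=m}^{2m}|\Delta c_n|\le K(\mathbf C)\big(|c_m|+|c_{2m}|\big)$ for all $m=1,2,\dots$. (For nonnegative real sequences the angular condition is automatic.) *)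

theory Defs
  imports "HOL-Analysis.Analysis"
begin

definition sector :: "real \<Rightarrow> complex set" where
  "sector \<theta>0 = {z. z = 0 \<or> \<bar>Arg z\<bar> \<le> \<theta>0}"

(* Sequences are indexed from 1; the value at index 0 is ignored. *)
definition NBVS :: "(nat \<Rightarrow> complex) \<Rightarrow> bool" where
  "NBVS c \<longleftrightarrow>
     (\<exists>\<theta>0. 0 \<le> \<theta>0 \<and> \<theta>0 < pi / 2 \<and> (\<forall>n\<ge>1. c n \<in> sector \<theta>0)) \<and>
     (\<exists>K>0. \<forall>m\<ge>1. (\<Sum>n=m..2*m. norm (c n - c (Suc n))) \<le> K * (norm (c m) + norm (c (2*m))))"

definition sin_partial :: "(nat \<Rightarrow> real) \<Rightarrow> nat \<Rightarrow> real \<Rightarrow> real" where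
  "sin_partial b N x = (\<Sum>n=1..N. b n * sin (real n * x))"

end

theory Submission
  imports Defs
begin

(* If n b_n tends to 0, Abel summation against the conjugate Dirichlet kernel, whose partial
   sums are O(1 / |sin (x/2)|), bounds the tails of the series uniformly in x: the terms with
   n <= 1 / |sin (x/2)| are estimated one by one, and beyond that point the NBVS condition, summed
   over dyadic blocks, bounds the variation of b on [A, oo) by 3 K sup {n |b_n| | n >= A} / A.

   Conversely, convergence at pi/2 and pi/4 forces b_n -> 0, so Riemann's function
   F y = sum b_n sin (n y) / n^2 is continuous, and its second symmetric derivative is -f
   (Riemann's first lemma).  Where |f| <= eps, F + eps y^2 / 2 is convex by Schwarz's lemma;
   comparing its chords over [-h, h] and [x - h, x + h] with x = pi / (2m) bounds the block sum
   b_m + ... + b_2m by (2 pi + 8) eps.  Hence the dyadic block sums tend to 0, and by NBVS so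
   does k b_k. *)

section \<open>Abel summation against the conjugate Dirichlet kernel\<close>

lemma abs_sin_of_nat_mult_le: "\<bar>sin (real n * t)\<bar> \<le> real n * \<bar>sin t\<bar>"
proof (induction n)
  case (Suc n)
  have "\<bar>sin (real (Suc n) * t)\<bar> = \<bar>sin (real n * t) * cos t + cos (real n * t) * sin t\<bar>"
    by (simp add: distrib_right sin_add algebra_simps)
  also have "\<dots> \<le> \<bar>sin (real n * t)\<bar> * \<bar>cos t\<bar> + \<bar>cos (real n * t)\<bar> * \<bar>sin t\<bar>"
    by (simp flip: abs_mult)
  also have "\<dots> \<le> \<bar>sin (real n * t)\<bar> + \<bar>sin t\<bar>"
    by (intro add_mono mult_left_le mult_left_le_one_le) (auto simp: abs_cos_le_one)
  finally show ?case
    using Suc.IH by (simp add: algebra_simps)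
qed simp

lemma sin_half_mult_sum_sin:
  assumes "p \<le> q"
  shows "2 * sin (x/2) * (\<Sum>n=p..q. sin (real n * x))
           = cos ((real p - 1/2) * x) - cos ((real q + 1/2) * x)"
  using assms
proof (induction q rule: dec_induct)
  have telescope: "2 * sin (x/2) * sin (real n * x)
                     = cos ((real n - 1/2) * x) - cos ((real n + 1/2) * x)" for n
  proof -
    have "(real n - 1/2) * x = real n * x - x/2" "(real n + 1/2) * x = real n * x + x/2"
      by (simp_all add: algebra_simps)
    then show ?thesis
      by (simp add: cos_diff cos_add)
  qed
  {
    case base
    show ?case by (simp add: telescope)
  next
    case (step q)
    have "(real (Suc q) - 1/2) * x = (real q + 1/2) * x"
      by (simp add: algebra_simps)
    then show ?case
      using step.hyps step.IH telescope[of "Suc q"] by (simp add: algebra_simps)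
  }
qed

lemma abs_sum_sin_le_inverse_sin_half:
  assumes "sin (x/2) \<noteq> 0"
  shows "\<bar>\<Sum>n=p..q. sin (real n * x)\<bar> \<le> 1 / \<bar>sin (x/2)\<bar>"
proof (cases "p \<le> q")
  case True
  have "\<bar>2 * sin (x/2) * (\<Sum>n=p..q. sin (real n * x))\<bar> \<le> 2"
    unfolding sin_half_mult_sum_sin[OF True]
    using abs_cos_le_one[of "(real p - 1/2) * x"] abs_cos_le_one[of "(real q + 1/2) * x"]
    by linarith
  then show ?thesis
    using assms by (simp add: abs_mult field_simps)
qed simp

lemma sum_mult_Abel:
  fixes a b :: "nat \<Rightarrow> 'a::comm_ring"
  assumes "p \<le> q"
  shows "(\<Sum>n=p..q. b n * a n)
           = b q * (\<Sum>i=p..q. a i) + (\<Sum>n=p..<q. (b n - b (Suc n)) * (\<Sum>i=p..n. a i))"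
  using assms
  by (induction q rule: dec_induct) (simp_all add: algebra_simps)

lemma abs_sum_mult_le_Abel:
  fixes a b :: "nat \<Rightarrow> real"
  assumes "p \<le> q" and partial_sums: "\<And>r. p \<le> r \<Longrightarrow> r \<le> q \<Longrightarrow> \<bar>\<Sum>i=p..r. a i\<bar> \<le> D"
  shows "\<bar>\<Sum>n=p..q. b n * a n\<bar> \<le> D * (\<bar>b q\<bar> + (\<Sum>n=p..<q. \<bar>b n - b (Suc n)\<bar>))"
proof -
  have "\<bar>b q * (\<Sum>i=p..q. a i)\<bar> \<le> \<bar>b q\<bar> * D"
    unfolding abs_mult using assms by (intro mult_left_mono partial_sums) auto
  moreover have "\<bar>\<Sum>n=p..<q. (b n - b (Suc n)) * (\<Sum>i=p..n. a i)\<bar>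
                   \<le> (\<Sum>n=p..<q. \<bar>b n - b (Suc n)\<bar> * D)"
    by (rule order_trans[OF sum_abs sum_mono]) (auto simp: abs_mult intro!: mult_left_mono partial_sums)
  ultimately show ?thesis
    unfolding sum_mult_Abel[OF assms(1)] sum_distrib_right[symmetric]
    by (smt (verit) abs_triangle_ineq mult.commute distrib_left)
qed

lemma abs_diff_le_sum_abs_diff:
  fixes b :: "nat \<Rightarrow> real"
  assumes "j \<le> k"
  shows "\<bar>b j - b k\<bar> \<le> (\<Sum>i=j..<k. \<bar>b i - b (Suc i)\<bar>)"
  using assms
proof (induction k rule: dec_induct)
  case (step k)
  then show ?case
    using abs_triangle_ineq[of "b j - b k" "b k - b (Suc k)"] by simp
qed simp

lemma abs_sum_sin_series_low_le:
  fixes b :: "nat \<Rightarrow> real"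
  assumes "H \<subseteq> {1..N}" and "real N * \<bar>sin (x/2)\<bar> \<le> 1" and "0 \<le> e"
    and small: "\<And>n. n \<in> H \<Longrightarrow> \<bar>b n\<bar> \<le> e / real n"
  shows "\<bar>\<Sum>n\<in>H. b n * sin (real n * x)\<bar> \<le> 2 * e"
proof -
  define s where "s = \<bar>sin (x/2)\<bar>"
  have term_le: "\<bar>b n * sin (real n * x)\<bar> \<le> 2 * e * s" if "n \<in> H" for n
  proof -
    have n: "real n > 0"
      using that assms(1) by auto
    have "\<bar>sin (real n * x)\<bar> \<le> 2 * real n * s"
      using abs_sin_of_nat_mult_le[of "2*n" "x/2"] by (simp add: s_def)
    then have "\<bar>b n\<bar> * \<bar>sin (real n * x)\<bar> \<le> e / real n * (2 * real n * s)"
      using small[OF that] \<open>0 \<le> e\<close> by (intro mult_mono) auto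
    with n show ?thesis
      by (simp add: abs_mult)
  qed
  have "card H \<le> N"
    using card_mono[OF _ assms(1)] by simp
  have "\<bar>\<Sum>n\<in>H. b n * sin (real n * x)\<bar> \<le> real (card H) * (2 * e * s)"
    using order_trans[OF sum_abs sum_mono[OF term_le]] by simp
  also have "\<dots> \<le> real N * (2 * e * s)"
    using \<open>card H \<le> N\<close> \<open>0 \<le> e\<close> by (intro mult_right_mono) (auto simp: s_def)
  also have "\<dots> = (real N * s) * (2 * e)"
    by simp
  also have "\<dots> \<le> 2 * e"
    using assms(2) \<open>0 \<le> e\<close> by (intro mult_left_le_one_le) (auto simp: s_def)
  finally show ?thesis .
qed

section \<open>Convergence of sine series\<close>

lemma sin_partial_sums_lim:
  assumes "convergent (\<lambda>N. sin_partial b N y)"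
  shows "(\<lambda>n. b n * sin (real n * y)) sums lim (\<lambda>N. sin_partial b N y)"
proof -
  have "sin_partial b N y = (\<Sum>n<Suc N. b n * sin (real n * y))" for N
    by (induction N) (simp_all add: sin_partial_def)
  then have "(\<lambda>N. \<Sum>n<Suc N. b n * sin (real n * y)) \<longlonglongrightarrow> lim (\<lambda>N. sin_partial b N y)"
    using assms by (simp add: convergent_LIMSEQ_iff)
  then show ?thesis
    unfolding sums_def by (rule LIMSEQ_imp_Suc)
qed

lemma sin_series_term_tendsto_zero:
  assumes "convergent (\<lambda>N. sin_partial b N x)"
  shows "(\<lambda>n. b n * sin (real n * x)) \<longlonglongrightarrow> 0"
proof -
  from assms obtain L where "(\<lambda>N. sin_partial b N x) \<longlonglongrightarrow> L"
    by (auto simp: convergent_def)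
  then have "(\<lambda>N. sin_partial b (Suc N) x - sin_partial b N x) \<longlonglongrightarrow> L - L"
    by (intro tendsto_diff LIMSEQ_Suc)
  then have "(\<lambda>N. b (Suc N) * sin (real (Suc N) * x)) \<longlonglongrightarrow> 0"
    by (simp add: sin_partial_def)
  then show ?thesis
    by (rule LIMSEQ_imp_Suc)
qed

lemma abs_tendsto_zero_along_unit_sines:
  assumes "(\<lambda>n. b n * sin (real n * x)) \<longlonglongrightarrow> 0" "strict_mono r"
    and "\<And>j. \<bar>sin (real (r j) * x)\<bar> = 1"
  shows "(\<lambda>j. \<bar>b (r j)\<bar>) \<longlonglongrightarrow> 0"
proof -
  have "(\<lambda>j. \<bar>b (r j) * sin (real (r j) * x)\<bar>) \<longlonglongrightarrow> 0"
    using tendsto_rabs_zero[OF LIMSEQ_subseq_LIMSEQ[OF assms(1,2)]] by (simp add: o_def)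
  then show ?thesis
    by (simp add: abs_mult assms(3))
qed

lemma abs_sin_odd_mult_pi_half: "\<bar>sin (real (2*j + 1) * (pi/2))\<bar> = 1"
proof -
  have "sin (real (2*j + 1) * (pi/2)) = sin (real j * pi + pi/2)"
    by (simp add: algebra_simps)
  also have "\<dots> = (-1) ^ j"
    by (simp add: sin_add)
  finally show ?thesis
    by (simp add: power_abs)
qed

lemma uniformly_convergent_on_imp_continuous_lim:
  fixes f :: "nat \<Rightarrow> 'a::topological_space \<Rightarrow> 'b::metric_space"
  assumes "uniformly_convergent_on S f" and "\<And>N. continuous_on S (f N)"
  shows "(\<forall>x\<in>S. convergent (\<lambda>N. f N x)) \<and> continuous_on S (\<lambda>x. lim (\<lambda>N. f N x))"
proof -
  obtain l where l: "uniform_limit S f l sequentially"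
    using assms(1) unfolding uniformly_convergent_on_def by blast
  then have pointwise: "(\<lambda>N. f N x) \<longlonglongrightarrow> l x" if "x \<in> S" for x
    using that by (rule tendsto_uniform_limitI)
  have "continuous_on S l"
    using assms(2) by (intro uniform_limit_theorem[OF _ l]) auto
  then have "continuous_on S (\<lambda>x. lim (\<lambda>N. f N x))"
    by (rule continuous_on_eq) (simp add: limI[OF pointwise])
  with pointwise show ?thesis
    by (auto simp: convergent_def)
qed

section \<open>Real sequences of bounded dyadic variation\<close>

lemma filterlim_add_div_2_at_top: "filterlim (\<lambda>n::nat. (n + c) div 2) at_top sequentially"
  unfolding filterlim_at_top eventually_sequentially
proof
  fix Z :: nat
  show "\<exists>N. \<forall>n\<ge>N. Z \<le> (n + c) div 2"
    by (intro exI[of _ "2 * Z"]) auto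
qed

(* Only the variation condition of NBVS. *)
locale nbvs_real =
  fixes b :: "nat \<Rightarrow> real" and K :: real
  assumes K_nonneg: "0 \<le> K"
    and block_variation_le:
      "\<And>m. 1 \<le> m \<Longrightarrow> (\<Sum>n=m..2*m. \<bar>b n - b (Suc n)\<bar>) \<le> K * (\<bar>b m\<bar> + \<bar>b (2*m)\<bar>)"

lemma NBVS_of_real_imp_nbvs_real:
  assumes "NBVS (\<lambda>n. complex_of_real (b n))"
  obtains K where "nbvs_real b K"
proof -
  have "norm (complex_of_real u - complex_of_real v) = \<bar>u - v\<bar>" for u v
    by (simp flip: of_real_diff)
  with assms obtain K where "K > 0"
    and "\<forall>m\<ge>1. (\<Sum>n=m..2*m. \<bar>b n - b (Suc n)\<bar>) \<le> K * (\<bar>b m\<bar> + \<bar>b (2*m)\<bar>)"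
    unfolding NBVS_def by auto
  then show ?thesis
    by (intro that[of K]) (simp add: nbvs_real_def)
qed

context nbvs_real
begin

lemma tail_variation_le:
  assumes "1 \<le> A" and small: "\<And>n. A \<le> n \<Longrightarrow> \<bar>b n\<bar> \<le> e / real n"
  shows "(\<Sum>n=A..<q. \<bar>b n - b (Suc n)\<bar>) \<le> 3 * K * e / A"
proof -
  have "0 \<le> e / real A"
    using small[of A] by (meson abs_ge_zero order_trans le_refl)
  then have "0 \<le> e"
    using assms(1) by (simp add: zero_le_divide_iff)
  have block: "(\<Sum>n=m..<2*m. \<bar>b n - b (Suc n)\<bar>) \<le> 3*K*e/m - 3*K*e/(2*m)" if "A \<le> m" for m
  proof -
    have "(\<Sum>n=m..<2*m. \<bar>b n - b (Suc n)\<bar>) \<le> (\<Sum>n=m..2*m. \<bar>b n - b (Suc n)\<bar>)"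
      by (rule sum_mono2) auto
    also have "\<dots> \<le> K * (\<bar>b m\<bar> + \<bar>b (2*m)\<bar>)"
      using that assms(1) by (intro block_variation_le) simp
    also have "\<dots> \<le> K * (e / m + e / (2*m))"
      using small[of m] small[of "2*m"] that K_nonneg by (intro mult_left_mono add_mono) auto
    also have "\<dots> = 3*K*e/m - 3*K*e/(2*m)"
      by (simp add: field_simps)
    finally show ?thesis .
  qed
  have dyadic: "(\<Sum>n=A..<2^J*A. \<bar>b n - b (Suc n)\<bar>) \<le> 3*K*e/A - 3*K*e/(2^J*A)" for J
  proof (induction J)
    case (Suc J)
    let ?m = "2^J*A"
    have "(\<Sum>n=A..<2^Suc J*A. \<bar>b n - b (Suc n)\<bar>)
            = (\<Sum>n=A..<?m. \<bar>b n - b (Suc n)\<bar>) + (\<Sum>n=?m..<2*?m. \<bar>b n - b (Suc n)\<bar>)"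
      by (simp add: sum.atLeastLessThan_concat mult.assoc)
    also have "\<dots> \<le> (3*K*e/A - 3*K*e/(2^J*A)) + (3*K*e/?m - 3*K*e/(2*?m))"
      by (rule add_mono[OF Suc.IH block]) simp
    also have "\<dots> = 3*K*e/A - 3*K*e/(2^Suc J*A)"
      by (simp add: mult_ac)
    finally show ?case .
  qed simp
  have "q \<le> 2^q*A"
    using less_exp[of q] assms(1) by (metis le_trans less_imp_le mult_le_mono2 nat_mult_1_right mult.commute)
  then have "(\<Sum>n=A..<q. \<bar>b n - b (Suc n)\<bar>) \<le> (\<Sum>n=A..<2^q*A. \<bar>b n - b (Suc n)\<bar>)"
    by (intro sum_mono2) auto
  moreover have "0 \<le> 3*K*e/(2^q*A)"
    using K_nonneg \<open>0 \<le> e\<close> by simp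
  ultimately show ?thesis
    using dyadic[of q] by linarith
qed

lemma abs_sum_sin_series_high_le:
  assumes "1 \<le> real p * \<bar>sin (x/2)\<bar>" "0 \<le> e"
    and small: "\<And>n. p \<le> n \<Longrightarrow> \<bar>b n\<bar> \<le> e / real n"
  shows "\<bar>\<Sum>n=p..q. b n * sin (real n * x)\<bar> \<le> (3*K + 1) * e"
proof (cases "p \<le> q")
  case True
  define s where "s = \<bar>sin (x/2)\<bar>"
  have "p \<ge> 1"
    using assms(1) by (cases p) auto
  have "s > 0" "1 / s \<le> real p"
    using assms(1) by (auto simp: s_def divide_le_eq mult.commute intro: ccontr)
  have "\<bar>\<Sum>n=p..q. b n * sin (real n * x)\<bar> \<le> 1/s * (\<bar>b q\<bar> + (\<Sum>n=p..<q. \<bar>b n - b (Suc n)\<bar>))"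
    by (rule abs_sum_mult_le_Abel[OF True]) (use abs_sum_sin_le_inverse_sin_half \<open>s > 0\<close> in \<open>auto simp: s_def\<close>)
  also have "\<dots> \<le> 1/s * (e / p + 3 * K * e / p)"
  proof -
    have "\<bar>b q\<bar> \<le> e / q"
      using small True by blast
    also have "\<dots> \<le> e / p"
      using True \<open>p \<ge> 1\<close> \<open>0 \<le> e\<close> by (intro divide_left_mono) auto
    finally have "\<bar>b q\<bar> \<le> e / p" .
    moreover have "(\<Sum>n=p..<q. \<bar>b n - b (Suc n)\<bar>) \<le> 3 * K * e / p"
      using tail_variation_le \<open>p \<ge> 1\<close> small by blast
    ultimately show ?thesis
      using \<open>s > 0\<close> by (intro mult_left_mono) auto
  qed
  also have "\<dots> = (3*K + 1) * e * (1/s / p)"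
    using \<open>p \<ge> 1\<close> \<open>s > 0\<close> by (simp add: field_simps)
  also have "\<dots> \<le> (3*K + 1) * e"
    using \<open>1 / s \<le> real p\<close> \<open>p \<ge> 1\<close> \<open>s > 0\<close> K_nonneg \<open>0 \<le> e\<close>
    by (intro mult_left_le) (auto simp: field_simps)
  finally show ?thesis .
qed (use K_nonneg assms(2) in simp)

lemma abs_sum_sin_series_le:
  assumes "1 \<le> p" "0 \<le> e" and small: "\<And>n. p \<le> n \<Longrightarrow> \<bar>b n\<bar> \<le> e / real n"
  shows "\<bar>\<Sum>n=p..q. b n * sin (real n * x)\<bar> \<le> (3*K + 3) * e"
proof (cases "sin (x/2) = 0")
  case True
  then have "b n * sin (real n * x) = 0" for n
    using abs_sin_of_nat_mult_le[of "2*n" "x/2"] by simp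
  then have "(\<Sum>n=p..q. b n * sin (real n * x)) = 0"
    by (intro sum.neutral) blast
  then show ?thesis
    using K_nonneg \<open>0 \<le> e\<close> by simp
next
  case False
  define N where "N = nat \<lfloor>1 / \<bar>sin (x/2)\<bar>\<rfloor>"
  define A where "A = max p (Suc N)"
  have s: "\<bar>sin (x/2)\<bar> > 0"
    using False by simp
  have "real N \<le> 1 / \<bar>sin (x/2)\<bar>" "1 / \<bar>sin (x/2)\<bar> < real N + 1"
    using s by (simp_all add: N_def)
  moreover have "(real N + 1) * \<bar>sin (x/2)\<bar> \<le> real A * \<bar>sin (x/2)\<bar>"
    by (intro mult_right_mono) (auto simp: A_def)
  ultimately have N: "real N * \<bar>sin (x/2)\<bar> \<le> 1" "1 \<le> real A * \<bar>sin (x/2)\<bar>"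
    using s by (simp_all add: field_simps)
  define H where "H = {n\<in>{p..q}. n \<le> N}"
  have "{p..q} = H \<union> {A..q}"
    by (auto simp: H_def A_def)
  then have sum_split: "(\<Sum>n=p..q. b n * sin (real n * x))
               = (\<Sum>n\<in>H. b n * sin (real n * x)) + (\<Sum>n=A..q. b n * sin (real n * x))"
    by (simp only:) (rule sum.union_disjoint, auto simp: H_def A_def)
  have head: "\<bar>\<Sum>n\<in>H. b n * sin (real n * x)\<bar> \<le> 2 * e"
    by (rule abs_sum_sin_series_low_le[OF _ N(1) \<open>0 \<le> e\<close>]) (use assms in \<open>auto simp: H_def\<close>)
  have tail: "\<bar>\<Sum>n=A..q. b n * sin (real n * x)\<bar> \<le> (3*K + 1) * e"
    by (rule abs_sum_sin_series_high_le[OF N(2) \<open>0 \<le> e\<close>]) (use small in \<open>auto simp: A_def\<close>)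
  have "\<bar>\<Sum>n=p..q. b n * sin (real n * x)\<bar>
          \<le> \<bar>\<Sum>n\<in>H. b n * sin (real n * x)\<bar> + \<bar>\<Sum>n=A..q. b n * sin (real n * x)\<bar>"
    unfolding sum_split by (rule abs_triangle_ineq)
  also have "\<dots> \<le> 2 * e + (3*K + 1) * e"
    using head tail by (rule add_mono)
  finally show ?thesis
    by (simp add: algebra_simps)
qed

lemma uniformly_convergent_sin_partial:
  assumes "(\<lambda>n. real n * b n) \<longlonglongrightarrow> 0"
  shows "uniformly_convergent_on UNIV (sin_partial b)"
proof (rule Cauchy_uniformly_convergent, rule uniformly_Cauchy_onI')
  fix \<epsilon> :: real
  assume "\<epsilon> > 0"
  define e where "e = \<epsilon> / (3*K + 4)"
  have "e > 0" "(3*K + 3) * e < \<epsilon>"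
    using \<open>\<epsilon> > 0\<close> K_nonneg by (simp_all add: e_def field_simps)
  from assms \<open>e > 0\<close> obtain M0 where M0: "\<And>n. n \<ge> M0 \<Longrightarrow> \<bar>real n * b n\<bar> < e"
    unfolding LIMSEQ_iff by auto
  define M where "M = max M0 1"
  have small: "\<bar>b n\<bar> \<le> e / real n" if "M \<le> n" for n
    using M0[of n] that by (simp add: M_def abs_mult field_simps)
  show "\<exists>M. \<forall>x\<in>UNIV. \<forall>m\<ge>M. \<forall>n>m. dist (sin_partial b m x) (sin_partial b n x) < \<epsilon>"
  proof (intro exI ballI allI impI)
    fix x m n
    assume "M \<le> m" "m < n"
    obtain d where n: "n = m + d"
      using \<open>m < n\<close> less_imp_add_positive by blast
    have "sin_partial b n x = sin_partial b m x + (\<Sum>k=Suc m..n. b k * sin (real k * x))"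
      unfolding sin_partial_def n using sum.ub_add_nat[of 1 m "\<lambda>k. b k * sin (real k * x)" d] by simp
    then have "dist (sin_partial b m x) (sin_partial b n x) = \<bar>\<Sum>k=Suc m..n. b k * sin (real k * x)\<bar>"
      by (simp add: dist_real_def)
    also have "\<dots> \<le> (3*K + 3) * e"
      using \<open>M \<le> m\<close> \<open>e > 0\<close> small by (intro abs_sum_sin_series_le) (auto simp: M_def)
    finally show "dist (sin_partial b m x) (sin_partial b n x) < \<epsilon>"
      using \<open>(3*K + 3) * e < \<epsilon>\<close> by linarith
  qed
qed

lemma abs_le_block_bound:
  assumes "1 \<le> j" "j \<le> k" "k \<le> 2*j"
  shows "\<bar>b k\<bar> \<le> (K + 1) * \<bar>b j\<bar> + K * \<bar>b (2*j)\<bar>"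
proof -
  have "\<bar>b j - b k\<bar> \<le> (\<Sum>i=j..<k. \<bar>b i - b (Suc i)\<bar>)"
    by (rule abs_diff_le_sum_abs_diff) fact
  also have "\<dots> \<le> (\<Sum>i=j..2*j. \<bar>b i - b (Suc i)\<bar>)"
    using assms by (intro sum_mono2) auto
  also have "\<dots> \<le> K * (\<bar>b j\<bar> + \<bar>b (2*j)\<bar>)"
    using assms by (intro block_variation_le)
  finally have "\<bar>b j - b k\<bar> \<le> K * (\<bar>b j\<bar> + \<bar>b (2*j)\<bar>)" .
  then show ?thesis
    using abs_triangle_ineq2[of "b k" "b j"] by (simp add: abs_minus_commute algebra_simps)
qed

(* At pi/2 the series sees the odd coefficients and at pi/4 those with index 4j + 2; the block
   bound controls b (2j + 2) by b (2j + 1) and b (4j + 2). *)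
lemma tendsto_zero_if_sin_series_converges:
  assumes "convergent (\<lambda>N. sin_partial b N (pi/2))" "convergent (\<lambda>N. sin_partial b N (pi/4))"
  shows "b \<longlonglongrightarrow> 0"
proof -
  have odd: "(\<lambda>j. \<bar>b (2*j + 1)\<bar>) \<longlonglongrightarrow> 0"
    by (rule abs_tendsto_zero_along_unit_sines[OF sin_series_term_tendsto_zero[OF assms(1)]
          _ abs_sin_odd_mult_pi_half]) (simp add: strict_mono_def)
  have "real (4*j + 2) * (pi/4) = real (2*j + 1) * (pi/2)" for j
    by (simp add: algebra_simps)
  then have "\<bar>sin (real (4*j + 2) * (pi/4))\<bar> = 1" for j
    by (simp only: abs_sin_odd_mult_pi_half)
  then have even: "(\<lambda>j. \<bar>b (4*j + 2)\<bar>) \<longlonglongrightarrow> 0"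
    by (intro abs_tendsto_zero_along_unit_sines[OF sin_series_term_tendsto_zero[OF assms(2)]])
      (simp_all add: strict_mono_def)
  define g where "g j = (K + 1) * \<bar>b (2*j + 1)\<bar> + K * \<bar>b (4*j + 2)\<bar>" for j
  have "g \<longlonglongrightarrow> 0"
    unfolding g_def using tendsto_add[OF tendsto_mult_right_zero[OF odd] tendsto_mult_right_zero[OF even]]
    by simp
  then have g_lim: "(\<lambda>n. g (n div 2)) \<longlonglongrightarrow> 0"
    using filterlim_compose[OF _ filterlim_add_div_2_at_top[of 0]] by simp
  have bound: "\<bar>b (Suc n)\<bar> \<le> g (n div 2)" for n
  proof (cases "even n")
    case True
    then obtain j where "n = 2*j"
      by blast
    moreover have "0 \<le> K * \<bar>b (2*j + 1)\<bar> + K * \<bar>b (4*j + 2)\<bar>"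
      using K_nonneg by simp
    ultimately show ?thesis
      by (simp add: g_def algebra_simps)
  next
    case False
    then obtain j where "n = 2*j + 1"
      using oddE by blast
    then show ?thesis
      using abs_le_block_bound[of "2*j + 1" "2*j + 2"] by (simp add: g_def algebra_simps)
  qed
  have "(\<lambda>n. b (Suc n)) \<longlonglongrightarrow> 0"
    by (rule Lim_null_comparison[OF always_eventually g_lim]) (simp add: bound)
  then show ?thesis
    by (rule LIMSEQ_imp_Suc)
qed

lemma nb_le_block_sums:
  assumes nonneg: "\<And>n. 1 \<le> n \<Longrightarrow> 0 \<le> b n" and "1 \<le> j" "k \<le> 2*j" "2*j \<le> Suc k"
  shows "real k * b k \<le> 2 * ((K + 1) * (\<Sum>n=j..2*j. b n) + K * (\<Sum>n=2*j..2*(2*j). b n))"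
proof -
  have each: "b k \<le> (K + 1) * b i + K * b (2*i)" if "i \<in> {j..k}" for i
    using abs_le_block_bound[of i k] that assms nonneg[of i] nonneg[of k] nonneg[of "2*i"] by auto
  have "(\<Sum>i=j..k. b i) \<le> (\<Sum>n=j..2*j. b n)"
    using assms by (intro sum_mono2) auto
  moreover have "(\<Sum>i=j..k. b (2*i)) \<le> (\<Sum>n=2*j..2*(2*j). b n)"
  proof -
    have "(\<Sum>i=j..k. b (2*i)) = (\<Sum>n\<in>(\<lambda>i. 2*i) ` {j..k}. b n)"
      by (simp add: sum.reindex inj_on_def)
    also have "\<dots> \<le> (\<Sum>n=2*j..2*(2*j). b n)"
      using assms by (intro sum_mono2) auto
    finally show ?thesis .
  qed
  ultimately have sums_le: "(K + 1) * (\<Sum>i=j..k. b i) + K * (\<Sum>i=j..k. b (2*i))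
                     \<le> (K + 1) * (\<Sum>n=j..2*j. b n) + K * (\<Sum>n=2*j..2*(2*j). b n)"
    using K_nonneg by (intro add_mono mult_left_mono) auto
  have card_le: "real (card {j..k}) * b k \<le> (K + 1) * (\<Sum>i=j..k. b i) + K * (\<Sum>i=j..k. b (2*i))"
  proof -
    have "real (card {j..k}) * b k = (\<Sum>i=j..k. b k)"
      by simp
    also have "\<dots> \<le> (\<Sum>i=j..k. (K + 1) * b i + K * b (2*i))"
      by (rule sum_mono) (rule each)
    finally show ?thesis
      by (simp add: sum.distrib sum_distrib_left)
  qed
  have "real k * b k \<le> 2 * (real (card {j..k}) * b k)"
    using assms nonneg[of k] by (simp add: mult_right_mono flip: mult.assoc)
  also have "\<dots> \<le> 2 * ((K + 1) * (\<Sum>n=j..2*j. b n) + K * (\<Sum>n=2*j..2*(2*j). b n))"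
    using order_trans[OF card_le sums_le] by simp
  finally show ?thesis .
qed

lemma nb_tendsto_zero_if_block_sums_tendsto_zero:
  assumes nonneg: "\<And>n. 1 \<le> n \<Longrightarrow> 0 \<le> b n"
    and blocks: "(\<lambda>m. \<Sum>n=m..2*m. b n) \<longlonglongrightarrow> 0"
  shows "(\<lambda>n. real n * b n) \<longlonglongrightarrow> 0"
proof -
  define S where "S m = (\<Sum>n=m..2*m. b n)" for m
  define g where "g k = 2 * ((K + 1) * S (Suc k div 2) + K * S (2 * (Suc k div 2)))" for k
  have "(\<lambda>m. S (2*m)) \<longlonglongrightarrow> 0"
    using LIMSEQ_subseq_LIMSEQ[OF blocks, of "\<lambda>m. 2*m"] by (simp add: S_def strict_mono_def o_def)
  then have g_lim: "g \<longlonglongrightarrow> 0"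
    using blocks unfolding g_def S_def[symmetric]
    by (intro tendsto_mult_right_zero tendsto_add_zero
        filterlim_compose[OF _ filterlim_add_div_2_at_top[of 1, simplified]])
  have "\<bar>real k * b k\<bar> \<le> g k" if "1 \<le> k" for k
    using nb_le_block_sums[OF nonneg, of "Suc k div 2" k] nonneg[of k] that by (simp add: g_def S_def)
  then have "eventually (\<lambda>k. norm (real k * b k) \<le> g k) sequentially"
    unfolding eventually_sequentially real_norm_def by blast
  then show ?thesis
    by (rule Lim_null_comparison[OF _ g_lim])
qed

end

section \<open>Riemann's function and its second symmetric derivative\<close>

lemma abs_sin_minus_le:
  fixes u :: real
  shows "\<bar>sin u - u\<bar> \<le> \<bar>u\<bar>^3 / 6"
proof -
  have "(\<Sum>m<3. sin_coeff m * u ^ m) = u"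
    by (simp add: sin_coeff_def numeral_3_eq_3)
  then show ?thesis
    using Maclaurin_sin_bound[of u 3] by (simp add: fact_numeral field_simps)
qed

lemma abs_one_minus_cos_le:
  fixes u :: real
  shows "\<bar>1 - cos u\<bar> \<le> u^2 / 2"
proof -
  have "\<bar>1 - cos u\<bar> = 2 * sin (u/2) ^ 2"
    using cos_double_sin[of "u/2"] by simp
  also have "\<dots> \<le> 2 * (u/2)^2"
    using abs_sin_x_le_abs_x[of "u/2"] by (simp only: abs_le_square_iff)
  finally show ?thesis
    by (simp add: power2_eq_square)
qed

lemma sin_ge_half_self:
  fixes u :: real
  assumes "0 \<le> u" "u \<le> 1"
  shows "u / 2 \<le> sin u"
proof -
  have "u * u * u \<le> 1 * u"
    using assms by (intro mult_right_mono mult_le_one) auto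
  then have "u^3 \<le> u"
    by (simp add: power3_eq_cube)
  moreover have "u - sin u \<le> u^3 / 6"
    using abs_le_D2[OF abs_sin_minus_le[of u]] assms by simp
  ultimately show ?thesis
    using assms by linarith
qed

lemma abs_sinc_le:
  fixes u :: real
  assumes "u > 0"
  shows "\<bar>sin u / u\<bar> \<le> 1" and "\<bar>sin u / u\<bar> \<le> 1 / u"
  using abs_sin_x_le_abs_x[of u] abs_sin_le_one[of u] assms
  by (simp_all add: abs_divide divide_le_eq divide_right_mono)

lemma abs_sinc_minus_one_le:
  fixes u :: real
  assumes "u > 0"
  shows "\<bar>sin u / u - 1\<bar> \<le> u^2 / 6"
proof -
  have "\<bar>sin u / u - 1\<bar> = \<bar>sin u - u\<bar> / u"
    using assms by (simp add: field_simps abs_divide)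
  also have "\<dots> \<le> (u^3 / 6) / u"
    using abs_sin_minus_le[of u] assms by (intro divide_right_mono) auto
  also have "\<dots> = u^2 / 6"
    using assms by (simp add: power3_eq_cube power2_eq_square)
  finally show ?thesis .
qed

lemma abs_sinc_deriv_le:
  fixes u :: real
  assumes "u > 0"
  shows "\<bar>(u * cos u - sin u) / u^2\<bar> \<le> 2" and "1 \<le> u \<Longrightarrow> \<bar>(u * cos u - sin u) / u^2\<bar> \<le> 2 / u"
proof -
  have "\<bar>u * cos u\<bar> \<le> u"
    using abs_cos_le_one[of u] assms by (simp add: abs_mult mult_left_le)
  then have crude: "\<bar>u * cos u - sin u\<bar> \<le> u + 1"
    using abs_triangle_ineq4[of "u * cos u" "sin u"] abs_sin_le_one[of u] by linarith
  have "\<bar>u * cos u - sin u\<bar> \<le> 2 * u^2"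
  proof (cases "u \<ge> 1")
    case True
    then have "u \<le> u^2"
      by (simp add: power2_eq_square)
    then show ?thesis
      using crude True by linarith
  next
    case False
    have "u * cos u - sin u = - (u * (1 - cos u)) - (sin u - u)"
      by (simp add: algebra_simps)
    then have "\<bar>u * cos u - sin u\<bar> \<le> \<bar>- (u * (1 - cos u))\<bar> + \<bar>sin u - u\<bar>"
      using abs_triangle_ineq4[of "- (u * (1 - cos u))" "sin u - u"] by simp
    then have "\<bar>u * cos u - sin u\<bar> \<le> u * \<bar>1 - cos u\<bar> + \<bar>sin u - u\<bar>"
      using assms by (simp add: abs_mult)
    also have "\<dots> \<le> u * (u^2 / 2) + u^3 / 6"
      using abs_one_minus_cos_le[of u] abs_sin_minus_le[of u] assms
      by (intro add_mono mult_left_mono) auto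
    also have "\<dots> \<le> 2 * u^2"
      using False assms by (simp add: power3_eq_cube power2_eq_square mult_le_one)
    finally show ?thesis .
  qed
  then show "\<bar>(u * cos u - sin u) / u^2\<bar> \<le> 2"
    using assms by (simp add: abs_divide divide_le_eq)
  assume "1 \<le> u"
  then have "\<bar>u * cos u - sin u\<bar> / u^2 \<le> 2 * u / u^2"
    using crude by (intro divide_right_mono) auto
  then show "\<bar>(u * cos u - sin u) / u^2\<bar> \<le> 2 / u"
    using assms by (simp add: abs_divide power2_eq_square)
qed

lemma abs_sinc_diff_le:
  fixes t h :: real
  assumes "t > 0" "h > 0"
  shows "\<bar>sin (t + h) / (t + h) - sin t / t\<bar> \<le> 2 * h"
    and "1 \<le> t \<Longrightarrow> \<bar>sin (t + h) / (t + h) - sin t / t\<bar> \<le> 2 * h / t"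
proof -
  have deriv: "((\<lambda>u. sin u / u) has_real_derivative ((u * cos u - sin u) / u^2)) (at u)"
    if "t \<le> u" "u \<le> t + h" for u
    using that assms by (auto intro!: derivative_eq_intros simp: power2_eq_square field_simps)
  obtain z where z: "t < z" "z < t + h"
    and "sin (t + h) / (t + h) - sin t / t = (t + h - t) * ((z * cos z - sin z) / z^2)"
    using MVT2[of t "t + h" "\<lambda>u. sin u / u" "\<lambda>u. (u * cos u - sin u) / u^2", OF _ deriv]
      \<open>h > 0\<close> by auto
  then have mvt: "\<bar>sin (t + h) / (t + h) - sin t / t\<bar> = h * \<bar>(z * cos z - sin z) / z^2\<bar>"
    using assms by (simp add: abs_mult)
  have "z > 0"
    using z assms by simp
  show "\<bar>sin (t + h) / (t + h) - sin t / t\<bar> \<le> 2 * h"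
    unfolding mvt using mult_left_mono[OF abs_sinc_deriv_le(1)[OF \<open>z > 0\<close>], of h] assms
    by (simp add: mult.commute)
  assume "1 \<le> t"
  have "\<bar>(z * cos z - sin z) / z^2\<bar> \<le> 2 / z"
    using abs_sinc_deriv_le(2)[OF \<open>z > 0\<close>] z \<open>1 \<le> t\<close> by simp
  also have "\<dots> \<le> 2 / t"
    using z assms by (intro divide_left_mono) auto
  finally have "h * \<bar>(z * cos z - sin z) / z^2\<bar> \<le> h * (2 / t)"
    using assms by (intro mult_left_mono) auto
  then show "\<bar>sin (t + h) / (t + h) - sin t / t\<bar> \<le> 2 * h / t"
    unfolding mvt by (simp add: mult.commute)
qed

lemma abs_sinc_square_diff_le:
  fixes t h :: real
  assumes "t > 0" "h > 0"
  shows "\<bar>(sin (t + h) / (t + h))^2 - (sin t / t)^2\<bar> \<le> 4 * h"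
    and "1 \<le> t \<Longrightarrow> \<bar>(sin (t + h) / (t + h))^2 - (sin t / t)^2\<bar> \<le> 4 * h / t^2"
proof -
  define p q where "p = sin (t + h) / (t + h)" and "q = sin t / t"
  have factor: "\<bar>p^2 - q^2\<bar> = \<bar>p - q\<bar> * \<bar>p + q\<bar>"
    by (simp add: power2_eq_square algebra_simps flip: abs_mult)
  have "t + h > 0"
    using assms by simp
  have "\<bar>p + q\<bar> \<le> 2"
    using abs_sinc_le(1)[OF \<open>t + h > 0\<close>] abs_sinc_le(1)[OF \<open>t > 0\<close>] abs_triangle_ineq[of p q]
    by (simp add: p_def q_def)
  then show "\<bar>(sin (t + h) / (t + h))^2 - (sin t / t)^2\<bar> \<le> 4 * h"
    using abs_sinc_diff_le(1)[OF assms] factor mult_mono[of "\<bar>p - q\<bar>" "2 * h" "\<bar>p + q\<bar>" 2]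
    by (simp add: p_def q_def)
  assume "1 \<le> t"
  have "\<bar>p\<bar> \<le> 1 / t"
    using abs_sinc_le(2)[OF \<open>t + h > 0\<close>] assms divide_left_mono[of t "t + h" 1]
    by (simp add: p_def)
  then have "\<bar>p + q\<bar> \<le> 2 / t"
    using abs_sinc_le(2)[OF \<open>t > 0\<close>] abs_triangle_ineq[of p q] by (simp add: q_def)
  then have "\<bar>p - q\<bar> * \<bar>p + q\<bar> \<le> (2 * h / t) * (2 / t)"
    using abs_sinc_diff_le(2)[OF assms \<open>1 \<le> t\<close>] by (intro mult_mono) (auto simp: p_def q_def)
  then show "\<bar>(sin (t + h) / (t + h))^2 - (sin t / t)^2\<bar> \<le> 4 * h / t^2"
    using factor by (simp add: p_def q_def power2_eq_square)
qed

(* A telescoping majorant for (sin s / s)^2 on [t, oo): a step of length h <= 1 changes it by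
   at most 4h while s < 1, and by at most 4h / s^2 <= 8 / s - 8 / (s + h) afterwards. *)
definition sinc_square_variation_bound :: "real \<Rightarrow> real" where
  "sinc_square_variation_bound t = (if t < 1 then 16 - 4 * t else 8 / t)"

lemma sinc_square_variation_bound_nonneg:
  assumes "0 \<le> t"
  shows "0 \<le> sinc_square_variation_bound t"
  using assms by (simp add: sinc_square_variation_bound_def)

lemma abs_sinc_square_diff_le_variation_bound:
  fixes t h :: real
  assumes "0 < t" "0 < h" "h \<le> 1"
  shows "\<bar>(sin (t + h) / (t + h))^2 - (sin t / t)^2\<bar>
           \<le> sinc_square_variation_bound t - sinc_square_variation_bound (t + h)"
proof -
  consider "t + h < 1" | "t < 1" "1 \<le> t + h" | "1 \<le> t"
    by linarith
  then show ?thesis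
  proof cases
    case 1
    then show ?thesis
      using abs_sinc_square_diff_le(1)[OF assms(1,2)] assms
      by (simp add: sinc_square_variation_bound_def)
  next
    case 2
    then have "8 / (t + h) \<le> 8"
      by (simp add: divide_le_eq)
    then show ?thesis
      using 2 abs_sinc_square_diff_le(1)[OF assms(1,2)] assms
      by (simp add: sinc_square_variation_bound_def)
  next
    case 3
    have "4 * h / t^2 = 8 * h / (t * (2 * t))"
      by (simp add: power2_eq_square)
    also have "\<dots> \<le> 8 * h / (t * (t + h))"
      using assms 3 by (intro divide_left_mono mult_left_mono mult_pos_pos) auto
    also have "\<dots> = 8 / t - 8 / (t + h)"
      using assms by (simp add: field_simps)
    finally show ?thesis
      using 3 abs_sinc_square_diff_le(2)[OF assms(1,2) 3] assms
      by (simp add: sinc_square_variation_bound_def)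
  qed
qed

(* The factor by which a second symmetric difference of step 2h damps the n-th term of
   Riemann's function; the value 1 at n = 0 is the limit of (sin t / t)^2. *)
definition riemann_weight :: "real \<Rightarrow> nat \<Rightarrow> real" where
  "riemann_weight h n = (if n = 0 then 1 else (sin (real n * h) / (real n * h))^2)"

lemma abs_riemann_weight_le:
  assumes "h > 0"
  shows "\<bar>riemann_weight h n\<bar> \<le> 1"
proof (cases "n = 0")
  case False
  then have "\<bar>sin (real n * h) / (real n * h)\<bar> \<le> 1"
    using assms by (intro abs_sinc_le(1)) simp
  then show ?thesis
    using False by (simp add: riemann_weight_def abs_square_le_1)
qed (simp add: riemann_weight_def)

lemma riemann_weight_variation_le:
  assumes "0 < h" "h \<le> 1"
  shows "(\<Sum>n<N. \<bar>riemann_weight h n - riemann_weight h (Suc n)\<bar>) \<le> 17"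
proof -
  define P where "P n = sinc_square_variation_bound (real n * h)" for n
  have step: "\<bar>riemann_weight h (Suc n) - riemann_weight h (Suc (Suc n))\<bar> \<le> P (Suc n) - P (Suc (Suc n))"
    for n
  proof -
    have "real (Suc (Suc n)) * h = real (Suc n) * h + h"
      by (simp add: algebra_simps)
    then show ?thesis
      using abs_sinc_square_diff_le_variation_bound[of "real (Suc n) * h" h] assms
      by (simp add: P_def riemann_weight_def abs_minus_commute del: of_nat_Suc)
  qed
  show ?thesis
  proof (cases N)
    case (Suc M)
    have "\<bar>riemann_weight h 0 - riemann_weight h 1\<bar> \<le> 1"
      using abs_riemann_weight_le[OF assms(1), of 1] by (simp add: riemann_weight_def)
    moreover have "(\<Sum>n<M. \<bar>riemann_weight h (Suc n) - riemann_weight h (Suc (Suc n))\<bar>)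
                     \<le> (\<Sum>n<M. P (Suc n) - P (Suc (Suc n)))"
      by (rule sum_mono) (rule step)
    moreover have "(\<Sum>n<M. P (Suc n) - P (Suc (Suc n))) = P 1 - P (Suc M)"
      using sum_lessThan_telescope'[of "\<lambda>n. P (Suc n)" M] by simp
    moreover have "P 1 \<le> 16" "0 \<le> P (Suc M)"
      using assms sinc_square_variation_bound_nonneg[of "real (Suc M) * h"]
      by (simp_all add: P_def sinc_square_variation_bound_def)
    ultimately show ?thesis
      unfolding Suc sum.lessThan_Suc_shift by simp
  qed simp
qed

lemma riemann_weight_tendsto_one:
  assumes "h \<longlonglongrightarrow> 0" and "\<And>k. h k > 0"
  shows "(\<lambda>k. riemann_weight (h k) n) \<longlonglongrightarrow> 1"
proof (cases "n = 0")
  case False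
  define u where "u k = real n * h k" for k
  have "u \<longlonglongrightarrow> 0"
    unfolding u_def using tendsto_mult_right_zero[OF assms(1)] .
  then have "(\<lambda>k. (u k)^2) \<longlonglongrightarrow> 0"
    using tendsto_power[of u 0 sequentially 2] by simp
  then have bound_lim: "(\<lambda>k. (u k)^2 / 6) \<longlonglongrightarrow> 0"
    by (rule tendsto_divide_zero)
  have "\<bar>sin (u k) / u k - 1\<bar> \<le> (u k)^2 / 6" for k
    using False assms(2) by (intro abs_sinc_minus_one_le) (simp add: u_def)
  then have "(\<lambda>k. sin (u k) / u k - 1) \<longlonglongrightarrow> 0"
    by (intro Lim_null_comparison[OF always_eventually bound_lim]) simp
  then have "(\<lambda>k. (sin (u k) / u k - 1 + 1)^2) \<longlonglongrightarrow> (0 + 1)^2"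
    by (intro tendsto_intros)
  then show ?thesis
    using False by (simp add: riemann_weight_def u_def)
qed (simp add: riemann_weight_def)

lemma sum_mult_weights_minus_eq:
  fixes a w :: "nat \<Rightarrow> 'a::comm_ring_1"
  assumes "w 0 = 1"
  shows "(\<Sum>n<N. a n * w n) - s
           = (\<Sum>n<N. ((\<Sum>i<Suc n. a i) - s) * (w n - w (Suc n))) + ((\<Sum>i<N. a i) - s) * w N"
  by (induction N) (simp_all add: assms algebra_simps)

lemma abs_suminf_mult_weights_minus_le:
  fixes a w :: "nat \<Rightarrow> real"
  assumes "a sums s" "summable (\<lambda>n. a n * w n)" "w 0 = 1" "\<And>n. \<bar>w n\<bar> \<le> 1"
    and variation: "\<And>N. (\<Sum>n<N. \<bar>w n - w (Suc n)\<bar>) \<le> V"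
    and tail: "\<And>n. N0 \<le> n \<Longrightarrow> \<bar>(\<Sum>i<n. a i) - s\<bar> \<le> \<eta>"
  shows "\<bar>(\<Sum>n. a n * w n) - s\<bar>
           \<le> (\<Sum>n<N0. \<bar>(\<Sum>i<Suc n. a i) - s\<bar> * \<bar>w n - w (Suc n)\<bar>) + \<eta> * V"
proof -
  define S where "S N = (\<Sum>i<N. a i)" for N
  define E where "E = (\<Sum>n<N0. \<bar>S (Suc n) - s\<bar> * \<bar>w n - w (Suc n)\<bar>)"
  have "\<eta> \<ge> 0"
    using tail[of N0] by linarith
  have "(\<lambda>N. \<bar>(\<Sum>n<N. a n * w n) - s\<bar> - \<bar>S N - s\<bar>) \<longlonglongrightarrow> \<bar>(\<Sum>n. a n * w n) - s\<bar> - \<bar>s - s\<bar>"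
    using assms(1,2) unfolding S_def sums_def
    by (intro tendsto_intros) (simp add: summable_LIMSEQ)
  moreover have "\<bar>(\<Sum>n<N. a n * w n) - s\<bar> - \<bar>S N - s\<bar> \<le> E + \<eta> * V" if "N0 \<le> N" for N
  proof -
    have "\<bar>\<Sum>n<N. (S (Suc n) - s) * (w n - w (Suc n))\<bar> \<le> (\<Sum>n<N. \<bar>S (Suc n) - s\<bar> * \<bar>w n - w (Suc n)\<bar>)"
      by (rule order_trans[OF sum_abs]) (simp add: abs_mult)
    also have "\<dots> = E + (\<Sum>n=N0..<N. \<bar>S (Suc n) - s\<bar> * \<bar>w n - w (Suc n)\<bar>)"
      using that by (simp add: E_def lessThan_atLeast0 sum.atLeastLessThan_concat)
    also have "(\<Sum>n=N0..<N. \<bar>S (Suc n) - s\<bar> * \<bar>w n - w (Suc n)\<bar>) \<le> (\<Sum>n=N0..<N. \<eta> * \<bar>w n - w (Suc n)\<bar>)"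
      using tail[of "Suc _"] unfolding S_def by (intro sum_mono mult_right_mono) auto
    also have "\<dots> \<le> (\<Sum>n<N. \<eta> * \<bar>w n - w (Suc n)\<bar>)"
      using \<open>\<eta> \<ge> 0\<close> by (intro sum_mono2) auto
    also have "\<dots> \<le> \<eta> * V"
      using variation \<open>\<eta> \<ge> 0\<close> by (simp add: mult_left_mono flip: sum_distrib_left)
    finally have "\<bar>\<Sum>n<N. (S (Suc n) - s) * (w n - w (Suc n))\<bar> \<le> E + \<eta> * V"
      by simp
    moreover have "\<bar>(S N - s) * w N\<bar> \<le> \<bar>S N - s\<bar>"
      using assms(4)[of N] by (simp add: abs_mult mult_left_le)
    moreover have "\<bar>(\<Sum>n<N. a n * w n) - s\<bar>
                     \<le> \<bar>\<Sum>n<N. (S (Suc n) - s) * (w n - w (Suc n))\<bar> + \<bar>(S N - s) * w N\<bar>"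
      unfolding sum_mult_weights_minus_eq[of w a N s, OF assms(3)] S_def by (rule abs_triangle_ineq)
    ultimately show ?thesis
      by linarith
  qed
  ultimately have "\<bar>(\<Sum>n. a n * w n) - s\<bar> - \<bar>s - s\<bar> \<le> E + \<eta> * V"
    by (intro LIMSEQ_le_const2) auto
  then show ?thesis
    by (simp add: E_def S_def)
qed

lemma suminf_mult_weights_tendsto:
  fixes a :: "nat \<Rightarrow> real" and w :: "nat \<Rightarrow> nat \<Rightarrow> real"
  assumes "a sums s" and "\<And>k. summable (\<lambda>n. a n * w k n)"
    and "\<And>k. w k 0 = 1" and "\<And>k n. \<bar>w k n\<bar> \<le> 1" and "\<And>n. (\<lambda>k. w k n) \<longlonglongrightarrow> 1"
    and "\<And>k N. (\<Sum>n<N. \<bar>w k n - w k (Suc n)\<bar>) \<le> V"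
  shows "(\<lambda>k. \<Sum>n. a n * w k n) \<longlonglongrightarrow> s"
  unfolding LIMSEQ_iff
proof (intro allI impI)
  fix r :: real
  assume "r > 0"
  have "V \<ge> 0"
    using assms(6)[of _ 0] by simp
  define \<eta> where "\<eta> = r / (2 * (V + 1))"
  have "\<eta> > 0" "\<eta> * V < r / 2"
    using \<open>r > 0\<close> \<open>V \<ge> 0\<close> by (auto simp: \<eta>_def field_simps)
  obtain N0 where "\<forall>n\<ge>N0. \<bar>(\<Sum>i<n. a i) - s\<bar> < \<eta>"
    using assms(1) \<open>\<eta> > 0\<close> unfolding sums_def LIMSEQ_iff real_norm_def by blast
  then have N0: "\<bar>(\<Sum>i<n. a i) - s\<bar> \<le> \<eta>" if "N0 \<le> n" for n
    using that by (simp add: less_imp_le)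
  define E where "E k = (\<Sum>n<N0. \<bar>(\<Sum>i<Suc n. a i) - s\<bar> * \<bar>w k n - w k (Suc n)\<bar>)" for k
  have "(\<lambda>k. w k n - w k (Suc n)) \<longlonglongrightarrow> 0" for n
    using tendsto_diff[OF assms(5)[of n] assms(5)[of "Suc n"]] by simp
  then have "E \<longlonglongrightarrow> 0"
    unfolding E_def by (intro tendsto_null_sum tendsto_mult_right_zero tendsto_rabs_zero)
  moreover have "0 < r / 2"
    using \<open>r > 0\<close> by simp
  ultimately have "eventually (\<lambda>k. \<bar>E k\<bar> < r / 2) sequentially"
    by (rule order_tendstoD(2)[OF tendsto_rabs_zero])
  then obtain k0 where k0: "\<And>k. k0 \<le> k \<Longrightarrow> \<bar>E k\<bar> < r / 2"
    unfolding eventually_sequentially by blast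
  have "\<bar>(\<Sum>n. a n * w k n) - s\<bar> < r" if "k0 \<le> k" for k
  proof -
    have "\<bar>(\<Sum>n. a n * w k n) - s\<bar> \<le> E k + \<eta> * V"
      unfolding E_def by (rule abs_suminf_mult_weights_minus_le[OF assms(1,2,3,4,6) N0])
    then show ?thesis
      using k0[OF that] \<open>\<eta> * V < r / 2\<close> by linarith
  qed
  then show "\<exists>no. \<forall>k\<ge>no. norm ((\<Sum>n. a n * w k n) - s) < r"
    by auto
qed

definition riemann_function :: "(nat \<Rightarrow> real) \<Rightarrow> real \<Rightarrow> real" where
  "riemann_function b y = (\<Sum>n. b n * sin (real n * y) / (real n)^2)"

lemma norm_riemann_term_le:
  fixes b :: "nat \<Rightarrow> real"
  assumes "\<bar>b n\<bar> \<le> B"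
  shows "norm (b n * sin (real n * y) / (real n)^2) \<le> B * inverse (real n ^ 2)"
proof -
  have "\<bar>b n\<bar> * \<bar>sin (real n * y)\<bar> \<le> \<bar>b n\<bar>"
    by (rule mult_left_le) (auto simp: abs_sin_le_one)
  then have "\<bar>b n * sin (real n * y)\<bar> / (real n)^2 \<le> B / (real n)^2"
    using assms by (intro divide_right_mono) (auto simp: abs_mult)
  moreover have "norm (b n * sin (real n * y) / (real n)^2) = \<bar>b n * sin (real n * y)\<bar> / (real n)^2"
    by (simp add: abs_divide)
  ultimately show ?thesis
    by (simp add: divide_inverse)
qed

lemma riemann_function_sums:
  fixes b :: "nat \<Rightarrow> real"
  assumes "\<And>n. \<bar>b n\<bar> \<le> B"
  shows "(\<lambda>n. b n * sin (real n * y) / (real n)^2) sums riemann_function b y"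
proof -
  have "summable (\<lambda>n. b n * sin (real n * y) / (real n)^2)"
  proof (rule summable_comparison_test)
    show "summable (\<lambda>n. B * inverse (real n ^ 2))"
      by (intro summable_mult inverse_power_summable) simp
    have "norm (b n * sin (real n * y) / (real n)^2) \<le> B * inverse (real n ^ 2)" for n
      by (rule norm_riemann_term_le) (rule assms)
    then show "\<exists>N. \<forall>n\<ge>N. norm (b n * sin (real n * y) / (real n)^2) \<le> B * inverse (real n ^ 2)"
      by blast
  qed
  then show ?thesis
    unfolding riemann_function_def by (rule summable_sums)
qed

lemma continuous_on_riemann_function:
  fixes b :: "nat \<Rightarrow> real"
  assumes "\<And>n. \<bar>b n\<bar> \<le> B"
  shows "continuous_on UNIV (riemann_function b)"
proof -
  have limit: "uniform_limit UNIV (\<lambda>N y. \<Sum>n<N. b n * sin (real n * y) / (real n)^2)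
          (riemann_function b) sequentially"
    unfolding riemann_function_def[abs_def]
  proof (rule Weierstrass_m_test)
    show "norm (b n * sin (real n * y) / (real n)^2) \<le> B * inverse (real n ^ 2)" for n y
      by (rule norm_riemann_term_le) (rule assms)
    show "summable (\<lambda>n. B * inverse (real n ^ 2))"
      by (intro summable_mult inverse_power_summable) simp
  qed
  have "continuous_on UNIV (\<lambda>y. \<Sum>n<N. b n * sin (real n * y) / (real n)^2)" for N
  proof -
    have "continuous_on UNIV (\<lambda>y. \<Sum>n<N. b n / (real n)^2 * sin (real n * y))"
      by (intro continuous_intros)
    then show ?thesis
      by (simp add: mult.commute)
  qed
  then show ?thesis
    by (intro uniform_limit_theorem[OF always_eventually limit]) simp_all
qed

lemma sin_add_plus_sin_diff_minus:
  fixes x y :: real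
  shows "sin (x + y) + sin (x - y) - 2 * sin x = -4 * sin x * sin (y/2)^2"
proof -
  have cos_y: "cos y = 1 - 2 * sin (y/2)^2"
    using cos_double_sin[of "y/2"] by simp
  show ?thesis
    by (simp add: sin_add sin_diff cos_y algebra_simps)
qed

lemma riemann_function_second_difference_sums:
  fixes b :: "nat \<Rightarrow> real"
  assumes "\<And>n. \<bar>b n\<bar> \<le> B" and "h > 0"
  shows "(\<lambda>n. - (b n * sin (real n * y) * riemann_weight h n)) sums
           ((riemann_function b (y + 2*h) + riemann_function b (y - 2*h) - 2 * riemann_function b y) / (2*h)^2)"
proof -
  have termwise: "(b n * sin (real n * (y + 2*h)) / (real n)^2 + b n * sin (real n * (y - 2*h)) / (real n)^2
                - 2 * (b n * sin (real n * y) / (real n)^2)) / (2*h)^2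
              = - (b n * sin (real n * y) * riemann_weight h n)" for n
  proof (cases "n = 0")
    case False
    have trig: "sin (real n * (y + 2*h)) + sin (real n * (y - 2*h)) - 2 * sin (real n * y)
                  = -4 * sin (real n * y) * sin (real n * h)^2"
      using sin_add_plus_sin_diff_minus[of "real n * y" "real n * (2*h)"]
      by (simp add: distrib_left right_diff_distrib)
    have "(b n * sin (real n * (y + 2*h)) / (real n)^2 + b n * sin (real n * (y - 2*h)) / (real n)^2
                - 2 * (b n * sin (real n * y) / (real n)^2)) / (2*h)^2
          = b n * (sin (real n * (y + 2*h)) + sin (real n * (y - 2*h)) - 2 * sin (real n * y))
              / ((real n)^2 * (2*h)^2)"
      using False assms(2) by (simp add: field_simps)
    also have "\<dots> = b n * (-4 * sin (real n * y) * sin (real n * h)^2) / ((real n)^2 * (2*h)^2)"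
      unfolding trig ..
    also have "\<dots> = - (b n * sin (real n * y) * (sin (real n * h) / (real n * h))^2)"
      using False assms(2) by (simp add: field_simps power2_eq_square)
    finally show ?thesis
      using False by (simp add: riemann_weight_def)
  qed (simp add: riemann_weight_def)
  have "(\<lambda>n. (b n * sin (real n * (y + 2*h)) / (real n)^2 + b n * sin (real n * (y - 2*h)) / (real n)^2
                - 2 * (b n * sin (real n * y) / (real n)^2)) / (2*h)^2)
        sums ((riemann_function b (y + 2*h) + riemann_function b (y - 2*h) - 2 * riemann_function b y) / (2*h)^2)"
    by (intro sums_divide sums_diff sums_add sums_mult riemann_function_sums[OF assms(1)])
  then show ?thesis
    unfolding termwise .
qed

lemma riemann_function_second_difference_tendsto:
  fixes b :: "nat \<Rightarrow> real"
  assumes "\<And>n. \<bar>b n\<bar> \<le> B" and "(\<lambda>n. b n * sin (real n * y)) sums s"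
  shows "(\<lambda>k. (riemann_function b (y + 1 / real (Suc k)) + riemann_function b (y - 1 / real (Suc k))
               - 2 * riemann_function b y) / (1 / real (Suc k))^2) \<longlonglongrightarrow> - s"
proof -
  define h where "h k = 1 / (2 * real (Suc k))" for k
  have h: "h k > 0" "h k \<le> 1" "2 * h k = 1 / real (Suc k)" for k
    by (auto simp: h_def field_simps)
  have "(\<lambda>k. inverse (real (Suc k)) / 2) \<longlonglongrightarrow> 0"
    by (rule tendsto_divide_zero[OF LIMSEQ_inverse_real_of_nat])
  moreover have "h = (\<lambda>k. inverse (real (Suc k)) / 2)"
    by (auto simp: h_def fun_eq_iff field_simps)
  ultimately have "h \<longlonglongrightarrow> 0"
    by simp
  have second_diff: "(\<lambda>n. - (b n * sin (real n * y) * riemann_weight (h k) n)) sums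
      ((riemann_function b (y + 1 / real (Suc k)) + riemann_function b (y - 1 / real (Suc k))
        - 2 * riemann_function b y) / (1 / real (Suc k))^2)" for k
    using riemann_function_second_difference_sums[OF assms(1) h(1)] unfolding h(3) .
  have "(\<lambda>k. \<Sum>n. b n * sin (real n * y) * riemann_weight (h k) n) \<longlonglongrightarrow> s"
  proof (rule suminf_mult_weights_tendsto[OF assms(2)])
    show "summable (\<lambda>n. b n * sin (real n * y) * riemann_weight (h k) n)" for k
      using sums_summable[OF second_diff[of k]] summable_minus_iff by blast
    show "riemann_weight (h k) 0 = 1" for k
      by (simp add: riemann_weight_def)
    show "\<bar>riemann_weight (h k) n\<bar> \<le> 1" for k n
      by (rule abs_riemann_weight_le[OF h(1)])
    show "(\<lambda>k. riemann_weight (h k) n) \<longlonglongrightarrow> 1" for n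
      by (rule riemann_weight_tendsto_one[OF \<open>h \<longlonglongrightarrow> 0\<close> h(1)])
    show "(\<Sum>n<N. \<bar>riemann_weight (h k) n - riemann_weight (h k) (Suc n)\<bar>) \<le> 17" for k N
      by (rule riemann_weight_variation_le[OF h(1,2)])
  qed
  moreover have "(\<Sum>n. b n * sin (real n * y) * riemann_weight (h k) n)
      = - ((riemann_function b (y + 1 / real (Suc k)) + riemann_function b (y - 1 / real (Suc k))
           - 2 * riemann_function b y) / (1 / real (Suc k))^2)" for k
    using sums_unique[OF sums_minus[OF second_diff[of k]]] by simp
  ultimately show ?thesis
    using tendsto_minus by fastforce
qed

(* Schwarz: g is A minus its chord plus a small parabola vanishing at u and w; at an interior
   maximum of g the second differences of A would be at most -2 eta. *)
lemma chord_le_if_second_difference_bounded_below: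
  fixes A :: "real \<Rightarrow> real" and t :: "nat \<Rightarrow> real"
  assumes cont: "continuous_on {a..b} A" and "\<And>k. t k > 0" "t \<longlonglongrightarrow> 0"
    and second_diff: "\<And>y \<eta>. a < y \<Longrightarrow> y < b \<Longrightarrow> \<eta> > 0 \<Longrightarrow>
           eventually (\<lambda>k. - \<eta> < (A (y + t k) + A (y - t k) - 2 * A y) / (t k)^2) sequentially"
    and "a \<le> u" "u < v" "v < w" "w \<le> b"
  shows "A v \<le> A u + (A w - A u) * (v - u) / (w - u)"
proof (rule ccontr)
  define c where "c = (A w - A u) / (w - u)"
  define \<delta> where "\<delta> = A v - (A u + c * (v - u))"
  assume "\<not> ?thesis"
  then have "\<delta> > 0"
    by (simp add: \<delta>_def c_def)
  define \<eta> where "\<eta> = \<delta> / ((v - u) * (w - v)) / 2"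
  have "\<eta> > 0"
    using \<open>\<delta> > 0\<close> assms by (simp add: \<eta>_def)
  define g where "g x = A x - (A u + c * (x - u)) + \<eta> * (x - u) * (x - w)" for x
  have "g u = 0" "g w = 0"
    using assms by (simp_all add: g_def c_def)
  have "\<eta> * ((v - u) * (w - v)) = \<delta> / 2"
    using assms by (simp add: \<eta>_def)
  then have "g v = \<delta> / 2"
    by (simp add: g_def \<delta>_def algebra_simps)
  have "continuous_on {u..w} g"
    unfolding g_def using assms by (intro continuous_intros continuous_on_subset[OF cont]) auto
  then obtain y where y: "y \<in> {u..w}" and y_max: "\<And>x. x \<in> {u..w} \<Longrightarrow> g x \<le> g y"
    using continuous_attains_sup[of "{u..w}" g] assms by auto
  have "g y > 0"
    using y_max[of v] \<open>g v = \<delta> / 2\<close> \<open>\<delta> > 0\<close> assms by simp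
  then have "u < y" "y < w"
    using y \<open>g u = 0\<close> \<open>g w = 0\<close> by (auto simp: less_le)
  have "a < y" "y < b"
    using \<open>u < y\<close> \<open>y < w\<close> assms by linarith+
  have "eventually (\<lambda>k. t k < min (y - u) (w - y)
          \<and> - \<eta> < (A (y + t k) + A (y - t k) - 2 * A y) / (t k)^2) sequentially"
    using \<open>u < y\<close> \<open>y < w\<close> \<open>\<eta> > 0\<close>
    by (intro eventually_conj order_tendstoD(2)[OF assms(3)] second_diff[OF \<open>a < y\<close> \<open>y < b\<close>]) simp_all
  then obtain k where k: "t k < min (y - u) (w - y)"
    and quotient: "- \<eta> < (A (y + t k) + A (y - t k) - 2 * A y) / (t k)^2"
    unfolding eventually_sequentially by blast
  have "y + t k \<in> {u..w}" "y - t k \<in> {u..w}"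
    using k assms(2)[of k] by auto
  then have "g (y + t k) \<le> g y" "g (y - t k) \<le> g y"
    by (simp_all add: y_max)
  moreover have "A (y + t k) + A (y - t k) - 2 * A y
                   = (g (y + t k) + g (y - t k) - 2 * g y) - 2 * \<eta> * (t k)^2"
    by (simp add: g_def power2_eq_square algebra_simps)
  ultimately have "(A (y + t k) + A (y - t k) - 2 * A y) / (t k)^2 \<le> - 2 * \<eta>"
    using assms(2)[of k] by (simp add: divide_le_eq)
  then show False
    using quotient \<open>\<eta> > 0\<close> by simp
qed

lemma convex_on_if_second_difference_bounded_below:
  fixes A :: "real \<Rightarrow> real" and t :: "nat \<Rightarrow> real"
  assumes "continuous_on {a..b} A" and "\<And>k. t k > 0" "t \<longlonglongrightarrow> 0"
    and "\<And>y \<eta>. a < y \<Longrightarrow> y < b \<Longrightarrow> \<eta> > 0 \<Longrightarrow>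
           eventually (\<lambda>k. - \<eta> < (A (y + t k) + A (y - t k) - 2 * A y) / (t k)^2) sequentially"
  shows "convex_on {a..b} A"
proof (rule convex_on_linorderI)
  fix s x y :: real
  assume "0 < s" "s < 1" "x \<in> {a..b}" "y \<in> {a..b}" "x < y"
  define v where "v = (1 - s) * x + s * y"
  have "x < v" "v < y"
    using mult_strict_left_mono[OF \<open>x < y\<close>, of s] mult_strict_left_mono[OF \<open>x < y\<close>, of "1 - s"]
      \<open>0 < s\<close> \<open>s < 1\<close> by (simp_all add: v_def algebra_simps)
  then have "A v \<le> A x + (A y - A x) * (v - x) / (y - x)"
    using \<open>x \<in> {a..b}\<close> \<open>y \<in> {a..b}\<close>
    by (intro chord_le_if_second_difference_bounded_below[OF assms]) auto
  moreover have "(A y - A x) * (v - x) / (y - x) = s * A y - s * A x"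
    using \<open>x < y\<close> by (simp add: v_def field_simps)
  ultimately show "A ((1 - s) *\<^sub>R x + s *\<^sub>R y) \<le> (1 - s) * A x + s * A y"
    by (simp add: v_def algebra_simps)
qed simp

section \<open>Continuity of the sum at zero\<close>

lemma convex_on_riemann_function_plus_square:
  fixes b :: "nat \<Rightarrow> real" and f :: "real \<Rightarrow> real"
  assumes bounded: "\<And>n. \<bar>b n\<bar> \<le> B" and sums: "\<And>y. (\<lambda>n. b n * sin (real n * y)) sums f y"
    and small: "\<And>y. - d < y \<Longrightarrow> y < d \<Longrightarrow> \<bar>f y\<bar> \<le> \<epsilon>"
  shows "convex_on {-d..d} (\<lambda>y. riemann_function b y + \<epsilon> * y^2 / 2)"
    (is "convex_on _ ?A")
proof (rule convex_on_if_second_difference_bounded_below)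
  define t where "t k = 1 / real (Suc k)" for k
  show "continuous_on {-d..d} ?A"
    by (intro continuous_intros continuous_on_subset[OF continuous_on_riemann_function[OF bounded]]) auto
  show t_pos: "t k > 0" for k
    by (simp add: t_def)
  show "t \<longlonglongrightarrow> 0"
    using LIMSEQ_inverse_real_of_nat by (simp add: t_def[abs_def] inverse_eq_divide)
  show "eventually (\<lambda>k. - \<eta> < (?A (y + t k) + ?A (y - t k) - 2 * ?A y) / (t k)^2) sequentially"
    if "- d < y" "y < d" "\<eta> > 0" for y \<eta>
  proof -
    have "(?A (y + t k) + ?A (y - t k) - 2 * ?A y) / (t k)^2
            = (riemann_function b (y + t k) + riemann_function b (y - t k) - 2 * riemann_function b y)
                / (t k)^2 + \<epsilon>" for k
      using t_pos[of k] by (simp add: power2_eq_square field_simps)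
    moreover have "(\<lambda>k. (riemann_function b (y + t k) + riemann_function b (y - t k)
                        - 2 * riemann_function b y) / (t k)^2 + \<epsilon>) \<longlonglongrightarrow> - f y + \<epsilon>"
      unfolding t_def
      by (intro tendsto_add riemann_function_second_difference_tendsto[OF bounded sums] tendsto_const)
    moreover have "- \<eta> < - f y + \<epsilon>"
      using small[OF that(1,2)] that(3) by linarith
    ultimately show ?thesis
      using order_tendstoD(1) by fastforce
  qed
qed

lemma riemann_function_chord_estimate:
  fixes b :: "nat \<Rightarrow> real" and f :: "real \<Rightarrow> real"
  assumes bounded: "\<And>n. \<bar>b n\<bar> \<le> B" and sums: "\<And>y. (\<lambda>n. b n * sin (real n * y)) sums f y"
    and small: "\<And>y. - d < y \<Longrightarrow> y < d \<Longrightarrow> \<bar>f y\<bar> \<le> \<epsilon>"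
    and "0 < h" "2 * h < x" "x + h \<le> d"
  shows "(riemann_function b h - riemann_function b (- h))
           - (riemann_function b (x + h) - riemann_function b (x - h)) \<le> 2 * h * \<epsilon> * x"
proof -
  define A where "A y = riemann_function b y + \<epsilon> * y^2 / 2" for y
  have "convex_on {-d..d} A"
    unfolding A_def[abs_def] by (rule convex_on_riemann_function_plus_square[OF bounded sums small])
  moreover have "-h \<in> {-d..d}" "h \<in> {-d..d}" "x - h \<in> {-d..d}" "x + h \<in> {-d..d}"
    using assms by auto
  ultimately have "(A (-h) - A h) / (-h - h) \<le> (A (-h) - A (x + h)) / (-h - (x + h))"
    "(A (-h) - A (x + h)) / (-h - (x + h)) \<le> (A h - A (x + h)) / (h - (x + h))"
    "(A h - A (x + h)) / (h - (x + h)) \<le> (A (x - h) - A (x + h)) / ((x - h) - (x + h))"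
    using convex_on_slope_le[of "{-d..d}" A "-h" "x + h" h] convex_on_slope_le[of "{-d..d}" A h "x + h" "x - h"]
      assms by auto
  then have "(A (-h) - A h) / (- (2 * h)) \<le> (A (x - h) - A (x + h)) / (- (2 * h))"
    by simp
  then have "A h - A (-h) \<le> A (x + h) - A (x - h)"
    using \<open>0 < h\<close> by (simp add: divide_le_cancel)
  moreover have "A h - A (-h) = riemann_function b h - riemann_function b (-h)"
    by (simp add: A_def)
  moreover have "A (x + h) - A (x - h) = riemann_function b (x + h) - riemann_function b (x - h) + 2 * h * \<epsilon> * x"
    by (simp add: A_def power2_eq_square field_simps)
  ultimately show ?thesis
    by linarith
qed

lemma sine_difference_series_sums:
  fixes b :: "nat \<Rightarrow> real"
  assumes "\<And>n. \<bar>b n\<bar> \<le> B"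
  shows "(\<lambda>n. 2 * b n * sin (real n * h) * (1 - cos (real n * x)) / (real n)^2) sums
           ((riemann_function b h - riemann_function b (- h))
             - (riemann_function b (x + h) - riemann_function b (x - h)))"
proof -
  have "(b n * sin (real n * h) / (real n)^2 - b n * sin (real n * (- h)) / (real n)^2)
           - (b n * sin (real n * (x + h)) / (real n)^2 - b n * sin (real n * (x - h)) / (real n)^2)
        = 2 * b n * sin (real n * h) * (1 - cos (real n * x)) / (real n)^2" for n
  proof -
    have trig: "sin (real n * h) - sin (real n * (- h)) - (sin (real n * (x + h)) - sin (real n * (x - h)))
                  = 2 * sin (real n * h) * (1 - cos (real n * x))"
      by (simp add: distrib_left right_diff_distrib sin_add sin_diff algebra_simps)
    have "(b n * sin (real n * h) / (real n)^2 - b n * sin (real n * (- h)) / (real n)^2)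
           - (b n * sin (real n * (x + h)) / (real n)^2 - b n * sin (real n * (x - h)) / (real n)^2)
          = b n * (sin (real n * h) - sin (real n * (- h))
                    - (sin (real n * (x + h)) - sin (real n * (x - h)))) / (real n)^2"
      by (simp add: diff_divide_distrib right_diff_distrib)
    then show ?thesis
      unfolding trig by (simp add: algebra_simps)
  qed
  moreover have "(\<lambda>n. (b n * sin (real n * h) / (real n)^2 - b n * sin (real n * (- h)) / (real n)^2)
           - (b n * sin (real n * (x + h)) / (real n)^2 - b n * sin (real n * (x - h)) / (real n)^2))
        sums ((riemann_function b h - riemann_function b (- h))
               - (riemann_function b (x + h) - riemann_function b (x - h)))"
    by (intro sums_diff riemann_function_sums[OF assms])
  ultimately show ?thesis
    by simp
qed

lemma suminf_tail_ge_if_inverse_square_bound: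
  fixes c :: "nat \<Rightarrow> real"
  assumes "summable c" "1 \<le> N" and bound: "\<And>n. N < n \<Longrightarrow> \<bar>c n\<bar> \<le> C / (real n)^2"
  shows "- (C / N) \<le> (\<Sum>j. c (j + Suc N))"
proof -
  define g where "g j = C / real (j + N)" for j
  have "0 \<le> C / (real (Suc N))^2"
    using bound[of "Suc N"] abs_ge_zero[of "c (Suc N)"] by linarith
  then have "0 \<le> C"
    by (simp add: zero_le_divide_iff)
  have "(\<lambda>j. C * inverse (real (Suc (j + (N - 1))))) \<longlonglongrightarrow> C * 0"
    by (intro tendsto_mult tendsto_const LIMSEQ_ignore_initial_segment[OF LIMSEQ_inverse_real_of_nat])
  moreover have "Suc (j + (N - 1)) = j + N" for j
    using assms(2) by simp
  moreover have "g = (\<lambda>j. C * inverse (real (Suc (j + (N - 1)))))"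
    using assms(2) by (simp add: g_def fun_eq_iff divide_inverse)
  ultimately have "g \<longlonglongrightarrow> 0"
    by simp
  then have "(\<lambda>j. - (g j - g (Suc j))) sums (- (g 0 - 0))"
    by (intro sums_minus telescope_sums')
  then have telescope: "(\<lambda>j. - (g j - g (Suc j))) sums (- (C / N))"
    by (simp add: g_def)
  have termwise: "- (g j - g (Suc j)) \<le> c (j + Suc N)" for j
  proof -
    have "\<bar>c (j + Suc N)\<bar> \<le> C / (real (j + N) + 1)^2"
      using bound[of "j + Suc N"] by (simp add: add.commute)
    also have "\<dots> \<le> C / (real (j + N) * (real (j + N) + 1))"
      using \<open>0 \<le> C\<close> assms(2) by (intro divide_left_mono) (auto simp: power2_eq_square)
    also have "\<dots> = g j - g (Suc j)"
      using assms(2) by (simp add: g_def field_simps)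
    finally show ?thesis
      by linarith
  qed
  have "(\<Sum>j. - (g j - g (Suc j))) \<le> (\<Sum>j. c (j + Suc N))"
    by (rule suminf_le[OF termwise sums_summable[OF telescope] summable_ignore_initial_segment[OF assms(1)]])
  then show ?thesis
    using sums_unique[OF telescope] by simp
qed

lemma cos_nonpos:
  assumes "pi / 2 \<le> a" "a \<le> pi"
  shows "cos a \<le> 0"
  using cos_ge_zero[of "pi - a"] assms by simp

lemma abs_sine_difference_term_le:
  fixes b :: "nat \<Rightarrow> real"
  shows "\<bar>2 * b n * sin (real n * h) * (1 - cos (real n * x)) / (real n)^2\<bar> \<le> 4 * \<bar>b n\<bar> / (real n)^2"
proof -
  have "\<bar>sin (real n * h)\<bar> * \<bar>1 - cos (real n * x)\<bar> \<le> 1 * 2"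
    using abs_sin_le_one[of "real n * h"] abs_cos_le_one[of "real n * x"] by (intro mult_mono) auto
  then have "\<bar>b n\<bar> * (\<bar>sin (real n * h)\<bar> * \<bar>1 - cos (real n * x)\<bar>) \<le> \<bar>b n\<bar> * 2"
    by (intro mult_left_mono) auto
  then show ?thesis
    by (simp add: abs_mult abs_divide divide_right_mono)
qed

lemma sine_difference_term_ge:
  fixes b :: "nat \<Rightarrow> real"
  assumes "0 \<le> b i" "0 < h" "m \<le> i" "i \<le> 2 * m" "1 \<le> m" "2 * real m * h \<le> 1"
  shows "h / (2 * real m) * b i
           \<le> 2 * b i * sin (real i * h) * (1 - cos (real i * (pi / (2 * real m)))) / (real i)^2"
proof -
  have "real i > 0"
    using assms by simp
  have "real i * h \<le> 2 * real m * h"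
    using assms by (intro mult_right_mono) auto
  then have "real i * h \<le> 1"
    using assms by linarith
  then have "real i * h / 2 \<le> sin (real i * h)"
    using assms \<open>real i > 0\<close> by (intro sin_ge_half_self) auto
  moreover have "0 \<le> real i * h"
    using assms by simp
  moreover have "1 \<le> 1 - cos (real i * (pi / (2 * real m)))"
  proof -
    have "1/2 \<le> real i / (2 * real m)" "real i / (2 * real m) \<le> 1"
      using assms by (simp_all add: field_simps)
    then have "pi * (1/2) \<le> pi * (real i / (2 * real m))" "pi * (real i / (2 * real m)) \<le> pi * 1"
      by (intro mult_left_mono; simp)+
    moreover have "real i * (pi / (2 * real m)) = pi * (real i / (2 * real m))"
      by (simp add: mult.commute)
    ultimately have "pi / 2 \<le> real i * (pi / (2 * real m))" "real i * (pi / (2 * real m)) \<le> pi"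
      by linarith+
    then show ?thesis
      using cos_nonpos by simp
  qed
  moreover note \<open>0 \<le> b i\<close>
  ultimately have "2 * b i * (real i * h / 2) * 1 / (real i)^2
                     \<le> 2 * b i * sin (real i * h) * (1 - cos (real i * (pi / (2 * real m)))) / (real i)^2"
    by (intro divide_right_mono mult_mono mult_left_mono) auto
  moreover have "2 * b i * (real i * h / 2) * 1 / (real i)^2 = h * b i / real i"
    using \<open>real i > 0\<close> by (simp add: power2_eq_square field_simps)
  moreover have "h * b i / (2 * real m) \<le> h * b i / real i"
    using assms \<open>real i > 0\<close> by (intro divide_left_mono) auto
  ultimately show ?thesis
    by simp
qed

lemma block_sum_le_sine_difference_partial_sum:
  fixes b :: "nat \<Rightarrow> real"
  assumes nonneg: "\<And>n. 1 \<le> n \<Longrightarrow> 0 \<le> b n"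
    and "0 < h" "1 \<le> m" "2 * real m * h \<le> 1" "2 * m \<le> N" "real N * h \<le> pi"
  shows "h / (2 * real m) * (\<Sum>n=m..2*m. b n)
           \<le> (\<Sum>n<Suc N. 2 * b n * sin (real n * h) * (1 - cos (real n * (pi / (2 * real m)))) / (real n)^2)"
proof -
  define c where "c n = 2 * b n * sin (real n * h) * (1 - cos (real n * (pi / (2 * real m)))) / (real n)^2" for n
  have "h / (2 * real m) * (\<Sum>n=m..2*m. b n) \<le> (\<Sum>n=m..2*m. c n)"
    unfolding sum_distrib_left c_def using assms by (intro sum_mono sine_difference_term_ge) auto
  also have "\<dots> \<le> (\<Sum>n<Suc N. c n)"
  proof (rule sum_mono2)
    show "0 \<le> c n" if "n \<in> {..<Suc N} - {m..2*m}" for n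
    proof (cases "n = 0")
      case False
      have "real n * h \<le> real N * h"
        using that \<open>0 < h\<close> by (intro mult_right_mono) auto
      then have "real n * h \<le> pi"
        using assms(6) by linarith
      then have "0 \<le> sin (real n * h)"
        using \<open>0 < h\<close> by (intro sin_ge_zero) auto
      then show ?thesis
        using cos_le_one[of "real n * (pi / (2 * real m))"] nonneg[of n] False by (simp add: c_def)
    qed (simp add: c_def)
  qed (use assms in auto)
  finally show ?thesis
    by (simp add: c_def)
qed

lemma sine_difference_series_tail_ge:
  fixes b :: "nat \<Rightarrow> real"
  assumes bounded: "\<And>n. \<bar>b n\<bar> \<le> B" and "1 \<le> N" and tail: "\<And>n. N < n \<Longrightarrow> \<bar>b n\<bar> \<le> \<beta>"
  shows "- (4 * \<beta> / real N)
           \<le> (\<Sum>j. 2 * b (j + Suc N) * sin (real (j + Suc N) * h) * (1 - cos (real (j + Suc N) * x))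
                    / (real (j + Suc N))^2)"
proof (rule suminf_tail_ge_if_inverse_square_bound[OF _ \<open>1 \<le> N\<close>])
  show "summable (\<lambda>n. 2 * b n * sin (real n * h) * (1 - cos (real n * x)) / (real n)^2)"
    by (rule sums_summable[OF sine_difference_series_sums[where b = b, OF bounded]])
  show "\<bar>2 * b n * sin (real n * h) * (1 - cos (real n * x)) / (real n)^2\<bar> \<le> 4 * \<beta> / (real n)^2"
    if "N < n" for n
  proof -
    have "\<bar>2 * b n * sin (real n * h) * (1 - cos (real n * x)) / (real n)^2\<bar> \<le> 4 * \<bar>b n\<bar> / (real n)^2"
      by (rule abs_sine_difference_term_le)
    also have "\<dots> \<le> 4 * \<beta> / (real n)^2"
      using tail[OF that] by (intro divide_right_mono) auto
    finally show ?thesis .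
  qed
qed

lemma block_sum_le_sine_difference_series:
  fixes b :: "nat \<Rightarrow> real"
  assumes nonneg: "\<And>n. 1 \<le> n \<Longrightarrow> 0 \<le> b n" and bounded: "\<And>n. \<bar>b n\<bar> \<le> B"
    and "0 < h" "1 \<le> m" "2 * real m * h \<le> 1"
    and tail: "\<And>n. pi / h < real n \<Longrightarrow> \<bar>b n\<bar> \<le> \<beta>"
  shows "h / (2 * real m) * (\<Sum>n=m..2*m. b n)
           \<le> (\<Sum>n. 2 * b n * sin (real n * h) * (1 - cos (real n * (pi / (2 * real m)))) / (real n)^2)
              + 4 * \<beta> * h"
proof -
  define c where "c n = 2 * b n * sin (real n * h) * (1 - cos (real n * (pi / (2 * real m)))) / (real n)^2" for n
  define N where "N = nat \<lfloor>pi / h\<rfloor>"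
  have "0 \<le> pi / h"
    using \<open>0 < h\<close> by simp
  then have N: "real N \<le> pi / h" "pi / h < real N + 1"
    by (simp_all add: N_def)
  have "h \<le> 2 * real m * h"
    using mult_right_mono[of 1 "2 * real m" h] assms by simp
  then have "h \<le> 1"
    using assms by linarith
  then have "1 \<le> (pi - 1) / h"
    using \<open>0 < h\<close> pi_gt3 by (simp add: field_simps)
  then have "1 / h + 1 \<le> pi / h"
    by (simp add: diff_divide_distrib)
  moreover have "real (2 * m) \<le> 1 / h"
    using assms by (simp add: field_simps)
  ultimately have "1 / h \<le> real N" "2 * m \<le> N"
    using N by linarith+
  have "summable c"
    unfolding c_def[abs_def] by (rule sums_summable[OF sine_difference_series_sums[where b = b, OF bounded]])
  have "h / (2 * real m) * (\<Sum>n=m..2*m. b n) \<le> (\<Sum>n<Suc N. c n)"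
    unfolding c_def using N \<open>0 < h\<close> assms \<open>2 * m \<le> N\<close>
    by (intro block_sum_le_sine_difference_partial_sum[OF nonneg]) (auto simp: field_simps)
  moreover have "- (4 * \<beta> / real N) \<le> (\<Sum>j. c (j + Suc N))"
    unfolding c_def using \<open>2 * m \<le> N\<close> assms N
    by (intro sine_difference_series_tail_ge[OF bounded]) (auto intro: tail)
  moreover have "4 * \<beta> / real N \<le> 4 * \<beta> * h"
  proof -
    have "\<bar>b (Suc N)\<bar> \<le> \<beta>"
      using N by (intro tail) simp
    then have "0 \<le> \<beta>"
      using abs_ge_zero[of "b (Suc N)"] by linarith
    moreover have "1 / real N \<le> h"
      using \<open>1 / h \<le> real N\<close> \<open>2 * m \<le> N\<close> \<open>0 < h\<close> assms by (simp add: field_simps)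
    ultimately have "4 * \<beta> * (1 / real N) \<le> 4 * \<beta> * h"
      by (intro mult_left_mono) auto
    then show ?thesis
      by simp
  qed
  ultimately have "h / (2 * real m) * (\<Sum>n=m..2*m. b n) \<le> suminf c + 4 * \<beta> * h"
    using suminf_split_initial_segment[OF \<open>summable c\<close>, of "Suc N"] by linarith
  then show ?thesis
    unfolding c_def[abs_def] .
qed

lemma tendsto_zero_obtains_step_with_small_tail:
  fixes b :: "nat \<Rightarrow> real"
  assumes "b \<longlonglongrightarrow> 0" "0 < \<beta>" "0 < \<delta>"
  obtains h where "0 < h" "h \<le> \<delta>" "\<And>n. pi / h < real n \<Longrightarrow> \<bar>b n\<bar> \<le> \<beta>"
proof -
  obtain M where M: "\<forall>n\<ge>M. \<bar>b n\<bar> < \<beta>"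
    using assms(1,2) unfolding LIMSEQ_iff by auto
  define h where "h = min \<delta> (1 / (real M + 1))"
  have "0 < h" "h \<le> \<delta>" "h \<le> 1 / (real M + 1)"
    using assms(3) by (auto simp: h_def)
  moreover have "\<bar>b n\<bar> \<le> \<beta>" if "pi / h < real n" for n
  proof -
    have "real M + 1 \<le> 1 / h"
      using \<open>h \<le> 1 / (real M + 1)\<close> \<open>0 < h\<close> by (simp add: field_simps)
    also have "\<dots> \<le> pi / h"
      using \<open>0 < h\<close> pi_gt3 by (intro divide_right_mono) auto
    finally have "M \<le> n"
      using that by linarith
    then show ?thesis
      using M by (simp add: less_imp_le)
  qed
  ultimately show ?thesis
    using that by blast
qed

lemma block_sum_le_if_sum_small_near_zero:
  fixes b :: "nat \<Rightarrow> real" and f :: "real \<Rightarrow> real"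
  assumes nonneg: "\<And>n. 1 \<le> n \<Longrightarrow> 0 \<le> b n" and "b \<longlonglongrightarrow> 0" and bounded: "\<And>n. \<bar>b n\<bar> \<le> B"
    and sums: "\<And>y. (\<lambda>n. b n * sin (real n * y)) sums f y"
    and small: "\<And>y. - d < y \<Longrightarrow> y < d \<Longrightarrow> \<bar>f y\<bar> \<le> \<epsilon>" and "0 < \<epsilon>"
    and "1 \<le> m" "pi \<le> real m * d"
  shows "(\<Sum>n=m..2*m. b n) \<le> (2 * pi + 8) * \<epsilon>"
proof -
  define x where "x = pi / (2 * real m)"
  have "real m > 0"
    using assms by simp
  have "0 < real m * d"
    using assms(8) pi_gt_zero by linarith
  then have "d > 0"
    using \<open>real m > 0\<close> by (simp add: zero_less_mult_iff)
  have "0 < \<epsilon> / real m" "0 < min (1 / (2 * real m)) (d / 2)"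
    using \<open>0 < \<epsilon>\<close> \<open>real m > 0\<close> \<open>d > 0\<close> by simp_all
  then obtain h where "0 < h" "h \<le> min (1 / (2 * real m)) (d / 2)"
    and tail: "\<And>n. pi / h < real n \<Longrightarrow> \<bar>b n\<bar> \<le> \<epsilon> / real m"
    by (rule tendsto_zero_obtains_step_with_small_tail[OF \<open>b \<longlonglongrightarrow> 0\<close>]) blast
  have "2 * real m * h \<le> 1" "2 * h < x" "x + h \<le> d"
    using \<open>h \<le> min (1 / (2 * real m)) (d / 2)\<close> \<open>real m > 0\<close> assms(8) pi_gt3
    by (auto simp: x_def field_simps)
  have "h / (2 * real m) * (\<Sum>n=m..2*m. b n)
          \<le> (\<Sum>n. 2 * b n * sin (real n * h) * (1 - cos (real n * x)) / (real n)^2) + 4 * (\<epsilon> / real m) * h"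
    unfolding x_def using block_sum_le_sine_difference_series[OF nonneg bounded \<open>0 < h\<close> \<open>1 \<le> m\<close>
        \<open>2 * real m * h \<le> 1\<close> tail] .
  moreover have "(\<Sum>n. 2 * b n * sin (real n * h) * (1 - cos (real n * x)) / (real n)^2)
                   \<le> 2 * h * \<epsilon> * x"
    unfolding sums_unique[OF sine_difference_series_sums[OF bounded], symmetric]
    by (rule riemann_function_chord_estimate[OF bounded sums small \<open>0 < h\<close> \<open>2 * h < x\<close> \<open>x + h \<le> d\<close>])
  moreover have "2 * h * \<epsilon> * x + 4 * (\<epsilon> / real m) * h = h / (2 * real m) * ((2 * pi + 8) * \<epsilon>)"
    using \<open>real m > 0\<close> by (simp add: x_def field_simps)
  ultimately have "h / (2 * real m) * (\<Sum>n=m..2*m. b n) \<le> h / (2 * real m) * ((2 * pi + 8) * \<epsilon>)"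
    by linarith
  moreover have "h / (2 * real m) > 0"
    using \<open>0 < h\<close> \<open>real m > 0\<close> by simp
  ultimately show ?thesis
    by (simp only: mult_le_cancel_left_pos)
qed

lemma block_sums_tendsto_zero:
  fixes b :: "nat \<Rightarrow> real" and f :: "real \<Rightarrow> real"
  assumes nonneg: "\<And>n. 1 \<le> n \<Longrightarrow> 0 \<le> b n" and "b \<longlonglongrightarrow> 0"
    and sums: "\<And>y. (\<lambda>n. b n * sin (real n * y)) sums f y" and "isCont f 0"
  shows "(\<lambda>m. \<Sum>n=m..2*m. b n) \<longlonglongrightarrow> 0"
  unfolding LIMSEQ_iff
proof (intro allI impI)
  fix r :: real
  assume "r > 0"
  define \<epsilon> where "\<epsilon> = r / (2 * pi + 9)"
  have "0 < 2 * pi + 9"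
    using pi_gt_zero by linarith
  then have "\<epsilon> > 0" "(2 * pi + 8) * \<epsilon> < r"
    using \<open>r > 0\<close> by (simp_all add: \<epsilon>_def field_simps)
  obtain B where bounded: "\<And>n. \<bar>b n\<bar> \<le> B"
    using convergent_imp_Bseq[of b] \<open>b \<longlonglongrightarrow> 0\<close> unfolding convergent_def Bseq_def
    by (metis real_norm_def less_imp_le)
  have "f 0 = 0"
    using sums_unique[OF sums[of 0]] by simp
  obtain d where "d > 0" and d: "\<And>y. \<bar>y\<bar> < d \<Longrightarrow> \<bar>f y\<bar> < \<epsilon>"
    using \<open>isCont f 0\<close> \<open>\<epsilon> > 0\<close> \<open>f 0 = 0\<close> unfolding continuous_at_eps_delta dist_real_def by auto
  have small: "\<bar>f y\<bar> \<le> \<epsilon>" if "- d < y" "y < d" for y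
    using d[of y] that by (simp add: abs_less_iff less_imp_le)
  show "\<exists>M. \<forall>m\<ge>M. norm ((\<Sum>n=m..2*m. b n) - 0) < r"
  proof (intro exI allI impI)
    fix m
    assume m: "nat \<lceil>pi / d\<rceil> + 1 \<le> m"
    then have "pi / d \<le> real m"
      by linarith
    then have "pi \<le> real m * d"
      using \<open>d > 0\<close> by (simp add: field_simps)
    then have "(\<Sum>n=m..2*m. b n) \<le> (2 * pi + 8) * \<epsilon>"
      using m by (intro block_sum_le_if_sum_small_near_zero[OF nonneg \<open>b \<longlonglongrightarrow> 0\<close> bounded sums small \<open>\<epsilon> > 0\<close>]) auto
    moreover have "0 \<le> (\<Sum>n=m..2*m. b n)"
      using m nonneg by (intro sum_nonneg) auto
    ultimately show "norm ((\<Sum>n=m..2*m. b n) - 0) < r"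
      using \<open>(2 * pi + 8) * \<epsilon> < r\<close> by simp
  qed
qed

context nbvs_real
begin

lemma nb_tendsto_zero_if_continuous_at_zero:
  assumes nonneg: "\<And>n. 1 \<le> n \<Longrightarrow> 0 \<le> b n"
    and convergent: "\<And>x. convergent (\<lambda>N. sin_partial b N x)"
    and continuous: "isCont (\<lambda>x. lim (\<lambda>N. sin_partial b N x)) 0"
  shows "(\<lambda>n. real n * b n) \<longlonglongrightarrow> 0"
proof (rule nb_tendsto_zero_if_block_sums_tendsto_zero[OF nonneg])
  have "b \<longlonglongrightarrow> 0"
    by (intro tendsto_zero_if_sin_series_converges convergent)
  have sums: "(\<lambda>n. b n * sin (real n * y)) sums lim (\<lambda>N. sin_partial b N y)" for y
    by (rule sin_partial_sums_lim[OF convergent])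
  show "(\<lambda>m. \<Sum>n=m..2*m. b n) \<longlonglongrightarrow> 0"
    using block_sums_tendsto_zero[where f = "\<lambda>x. lim (\<lambda>N. sin_partial b N x)",
        OF nonneg \<open>b \<longlonglongrightarrow> 0\<close> sums continuous] .
qed

end

theorem theorem3:
  fixes b :: "nat \<Rightarrow> real"
  assumes nonneg: "\<forall>n\<ge>1. b n \<ge> 0"
    and nbvs: "NBVS (\<lambda>n. complex_of_real (b n))"
  shows "(uniformly_convergent_on UNIV (sin_partial b)
            \<longleftrightarrow> (\<lambda>n. real n * b n) \<longlonglongrightarrow> 0)
       \<and> ((\<forall>x. convergent (\<lambda>N. sin_partial b N x)) \<longrightarrow>
            (continuous_on UNIV (\<lambda>x. lim (\<lambda>N. sin_partial b N x))
              \<longleftrightarrow> (\<lambda>n. real n * b n) \<longlonglongrightarrow> 0))"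
proof -
  obtain K where "nbvs_real b K"
    using NBVS_of_real_imp_nbvs_real[OF nbvs] .
  then interpret nbvs_real b K .
  have "continuous_on UNIV (sin_partial b N)" for N
    unfolding sin_partial_def by (intro continuous_intros)
  then have continuous_if_uniform: "(\<forall>x. convergent (\<lambda>N. sin_partial b N x))
      \<and> continuous_on UNIV (\<lambda>x. lim (\<lambda>N. sin_partial b N x))"
    if "uniformly_convergent_on UNIV (sin_partial b)"
    using uniformly_convergent_on_imp_continuous_lim[OF that] by simp
  have nb_if_continuous: "(\<lambda>n. real n * b n) \<longlonglongrightarrow> 0"
    if "\<forall>x. convergent (\<lambda>N. sin_partial b N x)" "continuous_on UNIV (\<lambda>x. lim (\<lambda>N. sin_partial b N x))"
    using nonneg that by (intro nb_tendsto_zero_if_continuous_at_zero) (auto simp: continuous_on_eq_continuous_at)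
  show ?thesis
    using uniformly_convergent_sin_partial continuous_if_uniform nb_if_continuous by blast
qed

end
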